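(* Let $\hat K$ be the reference triangle with vertices $(0,0),(1,0),(0,1)$ and let $k\ge 0$. For each edge $f$ of $\hat K$ and each $0\le i\le k$, let $\mathscr{L}^{f,i}$ be the function on $\partial\hat K$ which vanishes off $f$ and equals on $f$ the Legendre polynomial of degree $i$ (in the arclength variable of $f$), normalised so that $\int_{\partial\hat K}(\mathscr{L}^{f,i})^2=1$. Let $$\Phi_k=\{\mathbf{u}\in \mathbb{P}_k(\hat K)^2:\ \nabla\cdot\mathbf{u}=0,\ \mathbf{u}\cdot\mathbf{n}_{out}=0 \text{ on }\partial\hat K\}.$$ Then every $\mathbf{u}\in\mathbb{P}_k(\hat K)^2$ with $\nabla\cdot\mathbf{u}=0$ can be uniquely decomposed as $$\mathbf{u}=\bar{\mathbf{v}}^0_{\mathbf{u}}+\bar{\mathbf{v}}^1_{\mathbf{u}}+\sum_{f}\sum_{i=1}^{k}\bar{\mathbf{v}}^{f,i}_{\mathbf{u}},$$ where the sum over $f$ runs over the three edges of $\hat K$, and (i) $\bar{\mathbf{v}}^0_{\mathbf{u}}\in\Phi_k$; (ii) $\bar{\mathbf{v}}^1_{\mathbf{u}}$ is a constant vector; (iii) each $\bar{\mathbf{v}}^{f,i}_{\mathbf{u}}\in\mathbb{P}_k(\hat K)^2$ is $L^2(\hat K)^2$-orthogonal to $\Phi_k$, satisfies $\nabla\cdot\bar{\mathbf{v}}^{f,i}_{\mathbf{u}}=0$, and its normal trace $\bar{\mathbf{v}}^{f,i}_{\mathbf{u}}\cdot\mathbf{n}_{out}|_{\partial\hat K}$ is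 $L^2(\partial\hat K)$-orthogonal to every $\mathscr{L}^{g,j}$ with $g$ an edge, $0\le j\le k$, and $(g,j)\neq(f,i)$.
   Context: $\mathbb{P}_k(\hat K)^2$ denotes vector fields on $\hat K$ whose two components are polynomials of total degree at most $k$; $\mathbf{n}_{out}$ is the outward unit normal on $\partial\hat K$. *)

theory Defs
  imports "HOL-Analysis.Analysis"
begin

definition Khat :: "(real \<times> real) set" where
  "Khat = {(x, y). 0 \<le> x \<and> 0 \<le> y \<and> x + y \<le> 1}"

definition is_poly2 :: "nat \<Rightarrow> (real \<times> real \<Rightarrow> real) \<Rightarrow> bool" where
  "is_poly2 k p \<longleftrightarrow> (\<exists>c :: nat \<Rightarrow> nat \<Rightarrow> real. \<forall>x y.
      p (x, y) = (\<Sum>a\<le>k. \<Sum>b\<le>k - a. c a b * x ^ a * y ^ b))"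

definition vpoly :: "nat \<Rightarrow> (real \<times> real \<Rightarrow> real \<times> real) \<Rightarrow> bool" where
  "vpoly k u \<longleftrightarrow> is_poly2 k (\<lambda>p. fst (u p)) \<and> is_poly2 k (\<lambda>p. snd (u p))"

definition divergence :: "(real \<times> real \<Rightarrow> real \<times> real) \<Rightarrow> real \<times> real \<Rightarrow> real" where
  "divergence u p = deriv (\<lambda>s. fst (u (s, snd p))) (fst p)
                  + deriv (\<lambda>s. snd (u (fst p, s))) (snd p)"

definition divfree :: "(real \<times> real \<Rightarrow> real \<times> real) \<Rightarrow> bool" where
  "divfree u \<longleftrightarrow> (\<forall>p. divergence u p = 0)"

datatype edge = Bottom | Hyp | Left

definition edges :: "edge set" where "edges = {Bottom, Hyp, Left}"

fun gam :: "edge \<Rightarrow> real \<Rightarrow> real \<times> real" where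
  "gam Bottom t = (t, 0)"
| "gam Hyp t = (1 - t, t)"
| "gam Left t = (0, 1 - t)"

fun elen :: "edge \<Rightarrow> real" where
  "elen Bottom = 1"
| "elen Hyp = sqrt 2"
| "elen Left = 1"

fun nout :: "edge \<Rightarrow> real \<times> real" where
  "nout Bottom = (0, -1)"
| "nout Hyp = (1 / sqrt 2, 1 / sqrt 2)"
| "nout Left = (-1, 0)"

text \<open>Functions on the boundary are represented edgewise: phi f t is the value at gam f t.\<close>
definition ntrace :: "(real \<times> real \<Rightarrow> real \<times> real) \<Rightarrow> edge \<Rightarrow> real \<Rightarrow> real" where
  "ntrace u f t = u (gam f t) \<bullet> nout f"

text \<open>L^2(boundary) inner product (arclength measure: ds = elen f * dt).\<close>
definition L2B :: "(edge \<Rightarrow> real \<Rightarrow> real) \<Rightarrow> (edge \<Rightarrow> real \<Rightarrow> real) \<Rightarrow> real" where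
  "L2B phi psi = (\<Sum>f\<in>edges. elen f * integral {0..1} (\<lambda>t. phi f t * psi f t))"

definition L2K :: "(real \<times> real \<Rightarrow> real \<times> real) \<Rightarrow> (real \<times> real \<Rightarrow> real \<times> real) \<Rightarrow> real" where
  "L2K u v = integral Khat (\<lambda>p. u p \<bullet> v p)"

text \<open>Legendre polynomials on [-1,1] (Bonnet recurrence).\<close>
fun legendre :: "nat \<Rightarrow> real \<Rightarrow> real" where
  "legendre 0 x = 1"
| "legendre (Suc 0) x = x"
| "legendre (Suc (Suc n)) x =
     ((2 * real n + 3) * x * legendre (Suc n) x - (real n + 1) * legendre n x) / (real n + 2)"

text \<open>Unnormalised: on edge f, Legendre polynomial of degree i in the arclength
  variable s = elen f * t in [0, elen f]; zero on other edges.  Then normalised.\<close>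
definition Lraw :: "edge \<Rightarrow> nat \<Rightarrow> edge \<Rightarrow> real \<Rightarrow> real" where
  "Lraw f i g t = (if g = f then legendre i (2 * t - 1) else 0)"

definition Leg :: "edge \<Rightarrow> nat \<Rightarrow> edge \<Rightarrow> real \<Rightarrow> real" where
  "Leg f i g t = Lraw f i g t / sqrt (L2B (Lraw f i) (Lraw f i))"

definition Phi :: "nat \<Rightarrow> (real \<times> real \<Rightarrow> real \<times> real) set" where
  "Phi k = {u. vpoly k u \<and> divfree u \<and> (\<forall>f\<in>edges. \<forall>t\<in>{0..1}. ntrace u f t = 0)}"

definition is_decomp ::
  "nat \<Rightarrow> (real \<times> real \<Rightarrow> real \<times> real) \<Rightarrow> (real \<times> real \<Rightarrow> real \<times> real)
     \<Rightarrow> (real \<times> real \<Rightarrow> real \<times> real) \<Rightarrow> (edge \<Rightarrow> nat \<Rightarrow> real \<times> real \<Rightarrow> real \<times> real) \<Rightarrow> bool" where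
  "is_decomp k u v0 v1 vf \<longleftrightarrow>
     (\<forall>p. u p = v0 p + v1 p + (\<Sum>f\<in>edges. \<Sum>i=1..k. vf f i p))
   \<and> v0 \<in> Phi k
   \<and> (\<exists>c. \<forall>p. v1 p = c)
   \<and> (\<forall>f\<in>edges. \<forall>i\<in>{1..k}.
        vpoly k (vf f i) \<and> divfree (vf f i)
      \<and> (\<forall>w\<in>Phi k. L2K (vf f i) w = 0)
      \<and> (\<forall>g\<in>edges. \<forall>j\<le>k. (g, j) \<noteq> (f, i) \<longrightarrow> L2B (ntrace (vf f i)) (Leg g j) = 0))"

end

(*
  On each edge the normal trace of a field in P_k(K)^2 is a polynomial of degree at most k,
  so it expands in the shifted Legendre polynomials L_0, ..., L_k of that edge. A divergence-free
  polynomial field has a polynomial stream function, hence zero total outward flux; therefore the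
  three edge means (the L_0-coefficients) are the normal components of one constant field.
  For every edge f and 1 <= i <= k an explicit divergence-free polynomial field has normal trace
  L_i on f and 0 on the other edges; subtracting its L^2-projection onto the finite-dimensional
  space Phi_k makes it orthogonal to Phi_k without changing its normal trace. Removing from u the
  constant and these fields, weighted by the Legendre coefficients of its normal trace, leaves a
  field with zero normal trace, i.e. an element of Phi_k.
  Uniqueness: the Legendre moments of the normal trace of each edge field are determined by u, so
  the difference of two candidate edge fields lies in Phi_k and is orthogonal to Phi_k, hence
  vanishes; the constant is then fixed by its normal components on two edges.
*)
theory Submission
  imports Defs "HOL-Computational_Algebra.Polynomial" "HOL-Library.Function_Algebras"
begin

section \<open>Shifted Legendre polynomials\<close>

fun shifted_legendre :: "nat \<Rightarrow> real poly" where
  "shifted_legendre 0 = 1"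
| "shifted_legendre (Suc 0) = [:-1, 2:]"
| "shifted_legendre (Suc (Suc n)) =
     smult (1 / (real n + 2)) (smult (2 * real n + 3) ([:-1, 2:] * shifted_legendre (Suc n))
                              - smult (real n + 1) (shifted_legendre n))"

lemma poly_shifted_legendre: "poly (shifted_legendre n) t = legendre n (2 * t - 1)"
  by (induction n rule: shifted_legendre.induct) (auto simp: field_simps)

lemma legendre_at_1: "legendre n 1 = 1"
  by (induction n rule: shifted_legendre.induct) (auto simp: field_simps)

lemma degree_shifted_legendre: "degree (shifted_legendre n) = n"
proof -
  have "degree (shifted_legendre n) \<le> n \<and> coeff (shifted_legendre n) n > 0"
  proof (induction n rule: shifted_legendre.induct)
    case (3 n)
    let ?P = "shifted_legendre n" and ?Q = "shifted_legendre (Suc n)"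
    have "degree ([:-1, 2:] * ?Q) \<le> Suc (Suc n)"
      using degree_mult_le[of "[:-1, 2:]" ?Q] 3 by simp
    then have "degree (shifted_legendre (Suc (Suc n))) \<le> Suc (Suc n)"
      using 3 by (simp add: degree_diff_le le_SucI)
    moreover have "coeff ?P (Suc (Suc n)) = 0" "coeff ?Q (Suc (Suc n)) = 0"
      using 3 by (auto intro!: coeff_eq_0)
    then have "coeff (shifted_legendre (Suc (Suc n))) (Suc (Suc n))
             = (2 * real n + 3) * (2 * coeff ?Q (Suc n)) / (real n + 2)"
      by (simp add: coeff_pCons)
    ultimately show ?case using 3 by simp
  qed simp_all
  then show ?thesis using le_degree[of "shifted_legendre n" n] by (simp add: antisym)
qed

lemma shifted_legendre_nonzero: "shifted_legendre n \<noteq> 0"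
proof
  assume "shifted_legendre n = 0"
  then have "poly (shifted_legendre n) 1 = 0" by simp
  then show False by (simp add: poly_shifted_legendre legendre_at_1)
qed

lemma poly_shifted_legendre_Suc_Suc:
  "poly (shifted_legendre (Suc (Suc n))) t
     = ((2 * real n + 3) * (2 * t - 1) * poly (shifted_legendre (Suc n)) t
        - (real n + 1) * poly (shifted_legendre n) t) / (real n + 2)"
  by (simp add: field_simps)

lemma poly_pderiv_shifted_legendre_Suc_Suc:
  "poly (pderiv (shifted_legendre (Suc (Suc n)))) t
     = ((2 * real n + 3) * (2 * poly (shifted_legendre (Suc n)) t
          + (2 * t - 1) * poly (pderiv (shifted_legendre (Suc n))) t)
        - (real n + 1) * poly (pderiv (shifted_legendre n)) t) / (real n + 2)"
  by (simp add: pderiv_smult pderiv_diff pderiv_mult pderiv_pCons field_simps)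

text \<open>The two identities are proved by a simultaneous induction along Bonnet's recurrence; the
  second one is a first-order form of Legendre's differential equation.\<close>
lemma shifted_legendre_derivative_identities:
  "(2 * t - 1) * poly (pderiv (shifted_legendre (Suc n))) t - poly (pderiv (shifted_legendre n)) t
     = 2 * (real n + 1) * poly (shifted_legendre (Suc n)) t
   \<and> 2 * (t - t\<^sup>2) * poly (pderiv (shifted_legendre (Suc n))) t
     = (real n + 1)
         * (poly (shifted_legendre n) t - (2 * t - 1) * poly (shifted_legendre (Suc n)) t)"
proof (induction n)
  case 0
  then show ?case by (simp add: pderiv_pCons algebra_simps power2_eq_square)
next
  case (Suc n)
  define a b c where "a = poly (shifted_legendre n) t" and "b = poly (shifted_legendre (Suc n)) t"
    and "c = poly (shifted_legendre (Suc (Suc n))) t"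
  define a' b' c' where "a' = poly (pderiv (shifted_legendre n)) t"
    and "b' = poly (pderiv (shifted_legendre (Suc n))) t"
    and "c' = poly (pderiv (shifted_legendre (Suc (Suc n)))) t"
  define x m where "x = 2 * t - 1" and "m = real n + 1"
  have IH: "x * b' - a' = 2 * m * b" "2 * (t - t\<^sup>2) * b' = m * (a - x * b)"
    using Suc by (simp_all add: a_def b_def a'_def b'_def x_def m_def)
  have rec: "(m + 1) * c = (2 * m + 1) * x * b - m * a"
    unfolding c_def a_def b_def x_def m_def by (simp add: poly_shifted_legendre_Suc_Suc field_simps)
  have drec: "(m + 1) * c' = (2 * m + 1) * (2 * b + x * b') - m * a'"
    unfolding c'_def a'_def b'_def b_def x_def m_def
    by (simp only: poly_pderiv_shifted_legendre_Suc_Suc) (simp add: field_simps)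
  have "m + 1 \<noteq> 0" by (simp add: m_def)
  moreover have "(m + 1) * c' = (m + 1) * (2 * (m + 1) * b + x * b')"
    using drec IH by algebra
  ultimately have c': "c' = 2 * (m + 1) * b + x * b'" by simp
  have x2: "x\<^sup>2 - 1 = -4 * (t - t\<^sup>2)" unfolding x_def by algebra
  have "(m + 1) * (x * c' - b') = (m + 1) * (2 * (m + 1) * c)"
    using c' IH rec x2 by algebra
  then have "x * c' - b' = 2 * (m + 1) * c" using \<open>m + 1 \<noteq> 0\<close> by simp
  moreover have "2 * (t - t\<^sup>2) * c' = (m + 1) * (b - x * c)"
    using c' IH rec x2 by algebra
  ultimately show ?case
    by (simp add: a_def b_def c_def a'_def b'_def c'_def x_def m_def algebra_simps)
qed

lemma shifted_legendre_ode:
  "poly (pderiv ([:0, 1, -1:] * pderiv (shifted_legendre m))) t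
     = - (real m * (real m + 1)) * poly (shifted_legendre m) t"
proof (cases m)
  case (Suc n)
  let ?P = "shifted_legendre n" and ?Q = "shifted_legendre (Suc n)"
  have "poly ([:0, 1, -1:] * pderiv ?Q) s = poly (smult ((real n + 1) / 2) (?P - [:-1, 2:] * ?Q)) s"
    for s
    using conjunct2[OF shifted_legendre_derivative_identities[of s n]]
    by (simp add: field_simps power2_eq_square)
  then have weighted: "[:0, 1, -1:] * pderiv ?Q = smult ((real n + 1) / 2) (?P - [:-1, 2:] * ?Q)"
    by (intro poly_eq_poly_eq_iff[THEN iffD1] ext)
  have "poly (pderiv ([:0, 1, -1:] * pderiv ?Q)) t
      = (real n + 1) / 2 * (poly (pderiv ?P) t - 2 * poly ?Q t - (2 * t - 1) * poly (pderiv ?Q) t)"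
    unfolding weighted
    by (simp add: pderiv_smult pderiv_diff pderiv_add pderiv_mult pderiv_pCons pderiv_minus
        algebra_simps)
  also have "poly (pderiv ?P) t = (2 * t - 1) * poly (pderiv ?Q) t - 2 * (real n + 1) * poly ?Q t"
    using shifted_legendre_derivative_identities[of t n] by linarith
  finally show ?thesis using Suc by (simp add: field_simps)
qed simp

lemma integral_poly_pderiv:
  fixes p :: "real poly"
  assumes "a \<le> b"
  shows "integral {a..b} (poly (pderiv p)) = poly p b - poly p a"
  using assms
  by (intro integral_unique fundamental_theorem_of_calculus)
     (auto intro!: has_real_derivative_iff_has_vector_derivative[THEN iffD1]
        DERIV_subset[OF poly_DERIV])

lemma shifted_legendre_orthogonal:
  assumes "m \<noteq> n"
  shows "integral {0..1} (\<lambda>t. poly (shifted_legendre m) t * poly (shifted_legendre n) t) = 0"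
proof -
  define W where "W = [:0, 1, -1 :: real:]"
  let ?Lm = "shifted_legendre m" and ?Ln = "shifted_legendre n"
  define F where "F = W * pderiv ?Lm * ?Ln - W * pderiv ?Ln * ?Lm"
  \<comment> \<open>Green's identity for the Sturm--Liouville operator; the weight W vanishes at 0 and 1.\<close>
  have "poly (pderiv F)
      = (\<lambda>t. (real n * (real n + 1) - real m * (real m + 1)) * (poly ?Lm t * poly ?Ln t))"
  proof
    fix t
    have "pderiv F = pderiv (W * pderiv ?Lm) * ?Ln + (W * pderiv ?Lm) * pderiv ?Ln
        - (pderiv (W * pderiv ?Ln) * ?Lm + (W * pderiv ?Ln) * pderiv ?Lm)"
      by (simp add: F_def pderiv_diff pderiv_mult algebra_simps)
    then show "poly (pderiv F) t
        = (real n * (real n + 1) - real m * (real m + 1)) * (poly ?Lm t * poly ?Ln t)"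
      by (simp only: poly_diff poly_add poly_mult shifted_legendre_ode[folded W_def])
         (simp add: algebra_simps)
  qed
  moreover have "integral {0..1} (poly (pderiv F)) = 0"
    by (simp add: integral_poly_pderiv F_def W_def)
  moreover have "real n * (real n + 1) \<noteq> real m * (real m + 1)"
  proof
    assume "real n * (real n + 1) = real m * (real m + 1)"
    then have "n * (n + 1) = m * (m + 1)" by (metis of_nat_1 of_nat_add of_nat_eq_iff of_nat_mult)
    moreover have "strict_mono (\<lambda>n::nat. n * (n + 1))"
      by (rule strict_monoI) (intro mult_strict_mono, auto)
    ultimately show False using assms by (metis strict_mono_eq)
  qed
  ultimately show ?thesis by simp
qed

lemma integral_shifted_legendre:
  "integral {0..1} (poly (shifted_legendre j)) = (if j = 0 then 1 else 0)"
proof (cases "j = 0")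
  case True
  have "poly 1 = (\<lambda>_. 1 :: real)" by auto
  with True show ?thesis by simp
qed (use shifted_legendre_orthogonal[of j 0] in simp)

lemma continuous_nonneg_integral_0_imp_0:
  fixes f :: "'a::euclidean_space \<Rightarrow> real"
  assumes "continuous_on (cbox a b) f" "\<And>x. x \<in> cbox a b \<Longrightarrow> 0 \<le> f x"
    "integral (cbox a b) f = 0" "box a b \<noteq> {}" "x \<in> cbox a b"
  shows "f x = 0"
proof -
  have "(f has_integral 0) (cbox a b)"
    using assms(3) integrable_continuous[OF assms(1)] by (metis has_integral_integral)
  then show ?thesis
    using has_integral_0_cbox_imp_0[OF assms(1) _ _ assms(4,5)] assms(2) box_subset_cbox by blast
qed

lemma shifted_legendre_norm_pos:
  "integral {0..1} (\<lambda>t. poly (shifted_legendre n) t * poly (shifted_legendre n) t) > 0"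
proof -
  let ?f = "\<lambda>t. poly (shifted_legendre n) t * poly (shifted_legendre n) t"
  have "integral {0..1} ?f \<noteq> 0"
  proof
    assume "integral {0..1} ?f = 0"
    moreover have "continuous_on (cbox 0 1) ?f" by (intro continuous_intros)
    ultimately have "?f 1 = 0"
      using continuous_nonneg_integral_0_imp_0[of 0 1 ?f 1] by simp
    then show False by (simp add: poly_shifted_legendre legendre_at_1)
  qed
  moreover have "integral {0..1} ?f \<ge> 0"
    by (intro integral_nonneg integrable_continuous_real continuous_intros) auto
  ultimately show ?thesis by simp
qed

lemma shifted_legendre_span:
  "degree p \<le> k \<Longrightarrow> \<exists>c. p = (\<Sum>j\<le>k. smult (c j) (shifted_legendre j))"
proof (induction k arbitrary: p)
  case 0
  then have "p = smult (coeff p 0) (shifted_legendre 0)"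
    using degree_0_id[of p] by simp
  then show ?case by auto
next
  case (Suc k)
  let ?L = "shifted_legendre (Suc k)"
  define r where "r = coeff p (Suc k) / lead_coeff ?L"
  have "lead_coeff ?L \<noteq> 0" by (simp add: shifted_legendre_nonzero)
  then have top: "coeff (p - smult r ?L) (Suc k) = 0"
    by (simp add: r_def degree_shifted_legendre)
  have deg: "degree (p - smult r ?L) \<le> Suc k"
    using Suc.prems by (simp add: degree_diff_le degree_shifted_legendre)
  have "degree (p - smult r ?L) \<le> k"
  proof (rule degree_le, intro allI impI)
    fix i assume "k < i"
    then consider "i = Suc k" | "Suc k < i" by linarith
    then show "coeff (p - smult r ?L) i = 0"
    proof cases
      case 2
      then show ?thesis using deg by (intro coeff_eq_0) simp
    qed (use top in simp)
  qed
  then obtain c where "p - smult r ?L = (\<Sum>j\<le>k. smult (c j) (shifted_legendre j))"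
    using Suc.IH by blast
  then have "p = (\<Sum>j\<le>Suc k. smult ((c(Suc k := r)) j) (shifted_legendre j))"
    by (simp add: atMost_Suc algebra_simps)
  then show ?case by blast
qed

lemma integral_shifted_legendre_expansion:
  assumes "i \<le> k"
  shows "integral {0..1}
           (\<lambda>t. (\<Sum>j\<le>k. c j * poly (shifted_legendre j) t) * poly (shifted_legendre i) t)
       = c i * integral {0..1} (\<lambda>t. poly (shifted_legendre i) t * poly (shifted_legendre i) t)"
proof -
  let ?L = "\<lambda>j. poly (shifted_legendre j)"
  have "integral {0..1} (\<lambda>t. (\<Sum>j\<le>k. c j * ?L j t) * ?L i t)
      = integral {0..1} (\<lambda>t. \<Sum>j\<le>k. c j * (?L j t * ?L i t))"
    by (simp add: sum_distrib_right mult.assoc)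
  also have "\<dots> = (\<Sum>j\<le>k. integral {0..1} (\<lambda>t. c j * (?L j t * ?L i t)))"
    by (intro integral_sum integrable_continuous_real continuous_intros) simp
  also have "\<dots> = (\<Sum>j\<le>k. if j = i then c i * integral {0..1} (\<lambda>t. ?L i t * ?L i t) else 0)"
    by (intro sum.cong) (auto simp: shifted_legendre_orthogonal)
  finally show ?thesis using assms by simp
qed

lemma orthogonal_shifted_legendre_imp_zero:
  assumes "degree p \<le> k"
    and "\<And>j. j \<le> k \<Longrightarrow> integral {0..1} (\<lambda>t. poly p t * poly (shifted_legendre j) t) = 0"
  shows "p = 0"
proof -
  obtain c where c: "p = (\<Sum>j\<le>k. smult (c j) (shifted_legendre j))"
    using shifted_legendre_span[OF assms(1)] by blast
  have "c j = 0" if "j \<le> k" for j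
    using assms(2)[OF that] integral_shifted_legendre_expansion[OF that, of c]
      shifted_legendre_norm_pos[of j] by (simp add: c poly_sum)
  then show ?thesis by (simp add: c)
qed

section \<open>Bivariate polynomials and polynomial vector fields\<close>

lemma is_poly2_square_form:
  assumes "is_poly2 k p"
  obtains C where "p = (\<lambda>z. \<Sum>a\<le>k. \<Sum>b\<le>k. C a b * fst z ^ a * snd z ^ b)"
proof -
  obtain c where c: "\<And>x y. p (x, y) = (\<Sum>a\<le>k. \<Sum>b\<le>k - a. c a b * x ^ a * y ^ b)"
    using assms unfolding is_poly2_def by blast
  define C where "C a b = (if b \<le> k - a then c a b else 0)" for a b
  have "p = (\<lambda>z. \<Sum>a\<le>k. \<Sum>b\<le>k. C a b * fst z ^ a * snd z ^ b)"
  proof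
    fix z :: "real \<times> real"
    show "p z = (\<Sum>a\<le>k. \<Sum>b\<le>k. C a b * fst z ^ a * snd z ^ b)"
      using c[of "fst z" "snd z"] unfolding C_def
      by (simp, intro sum.cong[OF refl] sum.mono_neutral_cong_left) auto
  qed
  then show ?thesis by (rule that)
qed

lemma is_poly2_add:
  assumes "is_poly2 k p" "is_poly2 k q"
  shows "is_poly2 k (\<lambda>z. p z + q z)"
proof -
  obtain c d where "\<forall>x y. p (x, y) = (\<Sum>a\<le>k. \<Sum>b\<le>k - a. c a b * x ^ a * y ^ b)"
    "\<forall>x y. q (x, y) = (\<Sum>a\<le>k. \<Sum>b\<le>k - a. d a b * x ^ a * y ^ b)"
    using assms unfolding is_poly2_def by blast
  then show ?thesis
    unfolding is_poly2_def
    by (intro exI[of _ "\<lambda>a b. c a b + d a b"]) (simp add: sum.distrib algebra_simps)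
qed

lemma is_poly2_scale:
  assumes "is_poly2 k p"
  shows "is_poly2 k (\<lambda>z. r * p z)"
proof -
  obtain c where "\<forall>x y. p (x, y) = (\<Sum>a\<le>k. \<Sum>b\<le>k - a. c a b * x ^ a * y ^ b)"
    using assms unfolding is_poly2_def by blast
  then show ?thesis
    unfolding is_poly2_def
    by (intro exI[of _ "\<lambda>a b. r * c a b"]) (simp add: sum_distrib_left algebra_simps)
qed

lemma is_poly2_monomial:
  assumes "a + b \<le> k"
  shows "is_poly2 k (\<lambda>z. c * fst z ^ a * snd z ^ b)"
  unfolding is_poly2_def
proof (intro exI allI)
  fix x y :: real
  let ?C = "\<lambda>a' b'. if a' = a \<and> b' = b then c else 0"
  have "(\<Sum>b'\<le>k - a'. ?C a' b' * x ^ a' * y ^ b') = (if a' = a then c * x ^ a * y ^ b else 0)"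
    for a'
  proof (cases "a' = a")
    case True
    then have "(\<Sum>b'\<le>k - a'. ?C a' b' * x ^ a' * y ^ b')
             = (\<Sum>b'\<le>k - a. if b' = b then c * x ^ a * y ^ b else 0)"
      by (intro sum.cong) auto
    with True assms show ?thesis by simp
  qed simp
  then show "c * fst (x, y) ^ a * snd (x, y) ^ b = (\<Sum>a'\<le>k. \<Sum>b'\<le>k - a'. ?C a' b' * x ^ a' * y ^ b')"
    using assms by simp
qed

lemma is_poly2_const: "is_poly2 k (\<lambda>z. c)"
  using is_poly2_monomial[of 0 0 k c] by simp

lemma is_poly2_sum:
  "(\<And>i. i \<in> I \<Longrightarrow> is_poly2 k (f i)) \<Longrightarrow> is_poly2 k (\<lambda>z. \<Sum>i\<in>I. f i z)"
proof (induction I rule: infinite_finite_induct)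
  case (insert i I)
  then show ?case by (simp add: is_poly2_add)
qed (simp_all add: is_poly2_const)

lemma is_poly2_swap:
  assumes "is_poly2 k p"
  shows "is_poly2 k (\<lambda>z. p (snd z, fst z))"
proof -
  obtain c where c: "\<And>x y. p (x, y) = (\<Sum>a\<le>k. \<Sum>b\<le>k - a. c a b * x ^ a * y ^ b)"
    using assms unfolding is_poly2_def by blast
  have "is_poly2 k (\<lambda>z. \<Sum>a\<le>k. \<Sum>b\<le>k - a. c a b * fst z ^ b * snd z ^ a)"
    by (intro is_poly2_sum is_poly2_monomial) auto
  then show ?thesis by (simp add: c mult_ac)
qed

lemma poly_as_sum_atMost:
  fixes p :: "real poly"
  assumes "degree p \<le> k"
  shows "poly p x = (\<Sum>a\<le>k. coeff p a * x ^ a)"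
  unfolding poly_altdef using assms
  by (intro sum.mono_neutral_left) (auto simp: coeff_eq_0)

lemma is_poly2_poly_fst:
  assumes "degree g \<le> k"
  shows "is_poly2 k (\<lambda>z. poly g (fst z))"
proof -
  have "is_poly2 k (\<lambda>z. \<Sum>a\<le>k. coeff g a * fst z ^ a * snd z ^ 0)"
    by (intro is_poly2_sum is_poly2_monomial) auto
  then show ?thesis using assms by (simp add: poly_as_sum_atMost)
qed

lemma is_poly2_snd_mult_poly_fst:
  assumes "degree h < k"
  shows "is_poly2 k (\<lambda>z. snd z * poly h (fst z))"
proof -
  have "is_poly2 k (\<lambda>z. \<Sum>a\<le>k - 1. coeff h a * fst z ^ a * snd z ^ 1)"
    using assms by (intro is_poly2_sum is_poly2_monomial) auto
  moreover have "degree h \<le> k - 1" using assms by simp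
  ultimately show ?thesis
    by (simp add: poly_as_sum_atMost sum_distrib_left mult_ac)
qed

lemma is_poly2_continuous:
  assumes "is_poly2 k p"
  shows "continuous_on UNIV p"
proof -
  obtain C where "p = (\<lambda>z. \<Sum>a\<le>k. \<Sum>b\<le>k. C a b * fst z ^ a * snd z ^ b)"
    using assms by (rule is_poly2_square_form)
  then show ?thesis by (simp add: continuous_on_sum continuous_on_mult continuous_on_power
        continuous_on_fst continuous_on_snd continuous_on_id)
qed

lemma double_sum_has_derivative_x:
  "((\<lambda>s. \<Sum>a\<le>k. \<Sum>b\<le>k. C a b * s ^ a * y ^ b) has_real_derivative
     (\<Sum>a\<le>k. \<Sum>b\<le>k. C a b * (real a * x ^ (a - 1)) * y ^ b)) (at x)"
  by (intro DERIV_sum derivative_eq_intros) auto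

lemma double_sum_has_derivative_y:
  "((\<lambda>s. \<Sum>a\<le>k. \<Sum>b\<le>k. C a b * x ^ a * s ^ b) has_real_derivative
     (\<Sum>a\<le>k. \<Sum>b\<le>k. C a b * x ^ a * (real b * y ^ (b - 1)))) (at y)"
  by (intro DERIV_sum derivative_eq_intros) auto

lemma is_poly2_differentiable_x:
  assumes "is_poly2 k p"
  shows "(\<lambda>s. p (s, y)) field_differentiable (at x)"
proof -
  obtain C where "p = (\<lambda>z. \<Sum>a\<le>k. \<Sum>b\<le>k. C a b * fst z ^ a * snd z ^ b)"
    using assms by (rule is_poly2_square_form)
  then show ?thesis
    using double_sum_has_derivative_x[where C = C] by (auto simp: field_differentiable_def)
qed

lemma is_poly2_differentiable_y:
  assumes "is_poly2 k p"
  shows "(\<lambda>s. p (x, s)) field_differentiable (at y)"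
proof -
  obtain C where "p = (\<lambda>z. \<Sum>a\<le>k. \<Sum>b\<le>k. C a b * fst z ^ a * snd z ^ b)"
    using assms by (rule is_poly2_square_form)
  then show ?thesis
    using double_sum_has_derivative_y[where C = C] by (auto simp: field_differentiable_def)
qed

lemma is_poly2_comp_affine:
  assumes "is_poly2 k p" "degree A \<le> 1" "degree B \<le> 1"
  obtains P where "degree P \<le> k" "(\<lambda>t. p (poly A t, poly B t)) = poly P"
proof -
  obtain c where c: "\<And>x y. p (x, y) = (\<Sum>a\<le>k. \<Sum>b\<le>k - a. c a b * x ^ a * y ^ b)"
    using assms unfolding is_poly2_def by blast
  define P where "P = (\<Sum>a\<le>k. \<Sum>b\<le>k - a. smult (c a b) (A ^ a * B ^ b))"
  have deg: "degree (smult (c a b) (A ^ a * B ^ b)) \<le> k" if "a \<in> {..k}" "b \<in> {..k - a}" for a b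
  proof -
    have "degree (smult (c a b) (A ^ a * B ^ b)) \<le> degree (A ^ a) + degree (B ^ b)"
      using degree_mult_le[of "A ^ a" "B ^ b"] by simp
    also have "\<dots> \<le> degree A * a + degree B * b"
      by (intro add_mono degree_power_le)
    also have "\<dots> \<le> a + b"
      using assms(2,3) by (intro add_mono) (auto intro: order.trans[OF mult_right_mono[of _ 1]])
    also have "\<dots> \<le> k" using that by auto
    finally show ?thesis .
  qed
  have "degree P \<le> k"
    unfolding P_def by (rule degree_sum_le, simp, rule degree_sum_le, simp, rule deg)
  moreover have "(\<lambda>t. p (poly A t, poly B t)) = poly P"
    unfolding c P_def by (simp add: fun_eq_iff poly_sum mult.assoc)
  ultimately show ?thesis by (rule that)
qed

lemma power_sum_eq_0_if_infinite_roots: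
  fixes c :: "nat \<Rightarrow> real"
  assumes "infinite S" "\<And>x. x \<in> S \<Longrightarrow> (\<Sum>a\<le>k. c a * x ^ a) = 0"
  shows "(\<Sum>a\<le>k. c a * x ^ a) = 0"
proof -
  define P where "P = (\<Sum>a\<le>k. monom (c a) a)"
  have poly_P: "poly P x = (\<Sum>a\<le>k. c a * x ^ a)" for x
    unfolding P_def by (simp add: poly_sum poly_monom)
  have "S \<subseteq> {x. poly P x = 0}" using assms(2) by (simp add: poly_P subset_eq)
  then have "P = 0" using assms(1) poly_roots_finite[of P] finite_subset by blast
  then show ?thesis using poly_P[of x] by simp
qed

lemma is_poly2_eq_0:
  assumes "is_poly2 k p" "infinite X" "infinite Y" "\<And>x y. x \<in> X \<Longrightarrow> y \<in> Y \<Longrightarrow> p (x, y) = 0"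
  shows "p z = 0"
proof -
  obtain C where p: "p = (\<lambda>z. \<Sum>a\<le>k. \<Sum>b\<le>k. C a b * fst z ^ a * snd z ^ b)"
    using assms(1) by (rule is_poly2_square_form)
  have in_x: "p (x, y) = (\<Sum>a\<le>k. (\<Sum>b\<le>k. C a b * y ^ b) * x ^ a)" for x y
    unfolding p by (simp add: sum_distrib_left sum_distrib_right mult_ac)
  have in_y: "p (x, y) = (\<Sum>b\<le>k. (\<Sum>a\<le>k. C a b * x ^ a) * y ^ b)" for x y
    unfolding p by (subst sum.swap) (simp add: sum_distrib_left sum_distrib_right mult_ac)
  have "p (x, y) = 0" if "y \<in> Y" for x y
    unfolding in_x
    by (rule power_sum_eq_0_if_infinite_roots[OF assms(2)])
       (simp add: in_x[symmetric] assms(4) that)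
  then have "p (x, y) = 0" for x y
    unfolding in_y
    by (rule power_sum_eq_0_if_infinite_roots[OF assms(3)]) (simp add: in_y[symmetric])
  then show ?thesis by (cases z) simp
qed

lemma vpoly_add: "vpoly k u \<Longrightarrow> vpoly k v \<Longrightarrow> vpoly k (\<lambda>p. u p + v p)"
  unfolding vpoly_def by (auto intro: is_poly2_add)

lemma vpoly_scaleR: "vpoly k u \<Longrightarrow> vpoly k (\<lambda>p. r *\<^sub>R u p)"
  unfolding vpoly_def by (auto intro: is_poly2_scale)

lemma vpoly_const: "vpoly k (\<lambda>p. c)"
  unfolding vpoly_def by (auto intro: is_poly2_const)

lemma vpoly_diff: "vpoly k u \<Longrightarrow> vpoly k v \<Longrightarrow> vpoly k (\<lambda>p. u p - v p)"
  using vpoly_add[of k u "\<lambda>p. (-1) *\<^sub>R v p"] vpoly_scaleR[of k v "-1"] by simp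

lemma vpoly_sum: "(\<And>i. i \<in> I \<Longrightarrow> vpoly k (u i)) \<Longrightarrow> vpoly k (\<lambda>p. \<Sum>i\<in>I. u i p)"
  unfolding vpoly_def by (auto simp: fst_sum snd_sum intro: is_poly2_sum)

lemma vpoly_continuous: "vpoly k u \<Longrightarrow> continuous_on UNIV u"
  unfolding vpoly_def
  using continuous_on_Pair[of UNIV "\<lambda>p. fst (u p)" "\<lambda>p. snd (u p)"] is_poly2_continuous by auto

lemma vpoly_differentiable:
  assumes "vpoly k u"
  shows "(\<lambda>s. fst (u (s, y))) field_differentiable (at x)"
    and "(\<lambda>s. snd (u (x, s))) field_differentiable (at y)"
  using assms unfolding vpoly_def
  by (auto intro: is_poly2_differentiable_x[where p = "\<lambda>p. fst (u p)"]
      is_poly2_differentiable_y[where p = "\<lambda>p. snd (u p)"])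

lemma divergence_add:
  assumes "vpoly k u" "vpoly k v"
  shows "divergence (\<lambda>p. u p + v p) q = divergence u q + divergence v q"
  using vpoly_differentiable[OF assms(1)] vpoly_differentiable[OF assms(2)]
  unfolding divergence_def by (simp add: deriv_add)

lemma divergence_scaleR:
  assumes "vpoly k u"
  shows "divergence (\<lambda>p. r *\<^sub>R u p) q = r * divergence u q"
  using vpoly_differentiable[OF assms]
  unfolding divergence_def by (simp add: deriv_cmult distrib_left)

lemma divfree_add:
  "vpoly k u \<Longrightarrow> vpoly k v \<Longrightarrow> divfree u \<Longrightarrow> divfree v \<Longrightarrow> divfree (\<lambda>p. u p + v p)"
  unfolding divfree_def by (simp add: divergence_add)

lemma divfree_scaleR: "vpoly k u \<Longrightarrow> divfree u \<Longrightarrow> divfree (\<lambda>p. r *\<^sub>R u p)"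
  unfolding divfree_def by (simp add: divergence_scaleR)

lemma divfree_const: "divfree (\<lambda>p. c)"
  unfolding divfree_def divergence_def by simp

lemma divfree_diff:
  "vpoly k u \<Longrightarrow> vpoly k v \<Longrightarrow> divfree u \<Longrightarrow> divfree v \<Longrightarrow> divfree (\<lambda>p. u p - v p)"
  using divfree_add[of k u "\<lambda>p. (-1) *\<^sub>R v p"] divfree_scaleR[of k v "-1"] vpoly_scaleR[of k v "-1"]
  by simp

lemma divfree_sum:
  assumes "finite I" "\<And>i. i \<in> I \<Longrightarrow> vpoly k (u i) \<and> divfree (u i)"
  shows "divfree (\<lambda>p. \<Sum>i\<in>I. u i p)"
  using assms
proof (induction I rule: finite_induct)
  case (insert i I)
  then show ?case
    using divfree_add[of k "u i" "\<lambda>p. \<Sum>i\<in>I. u i p"] vpoly_sum[of I k u] by simp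
qed (simp add: divfree_const)

lemma ntrace_add: "ntrace (\<lambda>p. u p + v p) e t = ntrace u e t + ntrace v e t"
  unfolding ntrace_def by (simp add: inner_add_left)

lemma ntrace_diff: "ntrace (\<lambda>p. u p - v p) e t = ntrace u e t - ntrace v e t"
  unfolding ntrace_def by (simp add: inner_diff_left)

lemma ntrace_scaleR: "ntrace (\<lambda>p. r *\<^sub>R u p) e t = r * ntrace u e t"
  unfolding ntrace_def by simp

lemma ntrace_sum: "ntrace (\<lambda>p. \<Sum>i\<in>I. u i p) e t = (\<Sum>i\<in>I. ntrace (u i) e t)"
  unfolding ntrace_def by (simp add: inner_sum_left)

lemma ntrace_const: "ntrace (\<lambda>p. c) e t = c \<bullet> nout e"
  unfolding ntrace_def by simp

lemma gam_affine: "\<exists>A B. degree A \<le> 1 \<and> degree B \<le> 1 \<and> (\<forall>t. gam e t = (poly A t, poly B t))"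
proof (cases e)
  case Bottom then show ?thesis by (intro exI[of _ "[:0, 1:]"] exI[of _ 0]) simp
next
  case Hyp then show ?thesis by (intro exI[of _ "[:1, -1:]"] exI[of _ "[:0, 1:]"]) simp
next
  case Left then show ?thesis by (intro exI[of _ 0] exI[of _ "[:1, -1:]"]) simp
qed

lemma ntrace_poly:
  assumes "vpoly k u"
  obtains P where "degree P \<le> k" "ntrace u e = poly P"
proof -
  obtain A B where AB: "degree A \<le> 1" "degree B \<le> 1" "\<And>t. gam e t = (poly A t, poly B t)"
    using gam_affine by blast
  have fst: "is_poly2 k (\<lambda>p. fst (u p))" and snd: "is_poly2 k (\<lambda>p. snd (u p))"
    using assms by (simp_all add: vpoly_def)
  obtain P1 where P1: "degree P1 \<le> k" "(\<lambda>t. fst (u (poly A t, poly B t))) = poly P1"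
    by (rule is_poly2_comp_affine[OF fst AB(1,2)])
  obtain P2 where P2: "degree P2 \<le> k" "(\<lambda>t. snd (u (poly A t, poly B t))) = poly P2"
    by (rule is_poly2_comp_affine[OF snd AB(1,2)])
  let ?P = "smult (fst (nout e)) P1 + smult (snd (nout e)) P2"
  have "degree ?P \<le> k"
    using P1(1) P2(1) by (metis degree_add_le degree_smult_le order.trans)
  moreover have "ntrace u e = poly ?P"
  proof
    fix t
    have "fst (u (gam e t)) = poly P1 t" "snd (u (gam e t)) = poly P2 t"
      using fun_cong[OF P1(2), of t] fun_cong[OF P2(2), of t] by (simp_all add: AB(3))
    then show "ntrace u e t = poly ?P t"
      unfolding ntrace_def by (simp add: inner_prod_def mult.commute)
  qed
  ultimately show ?thesis by (rule that)
qed

lemma ntrace_mult_poly_integrable: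
  assumes "vpoly k u"
  shows "(\<lambda>t. ntrace u e t * poly q t) integrable_on {a..b}"
proof -
  obtain P where "degree P \<le> k" "ntrace u e = poly P"
    using assms by (rule ntrace_poly)
  then show ?thesis by (simp add: integrable_continuous_real continuous_intros)
qed

section \<open>Stream functions and the zero total flux\<close>

text \<open>In coefficient form: a divergence-free field satisfies
  \<open>u\<^sub>1(x, y) = u\<^sub>1(0, y) - \<integral>\<^sub>0\<^sup>x \<partial>\<^sub>y u\<^sub>2(s, y) ds\<close>.\<close>
lemma divfree_coefficient_identity:
  fixes C1 C2 :: "nat \<Rightarrow> nat \<Rightarrow> real"
  assumes "\<And>x y. (\<Sum>a\<le>k. \<Sum>b\<le>k. C1 a b * (real a * x ^ (a - 1)) * y ^ b)
                 + (\<Sum>a\<le>k. \<Sum>b\<le>k. C2 a b * x ^ a * (real b * y ^ (b - 1))) = 0"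
  shows "(\<Sum>b\<le>k. C1 0 b * y ^ b)
           - (\<Sum>a\<le>k. \<Sum>b\<le>k. C2 a b / real (Suc a) * x ^ Suc a * (real b * y ^ (b - 1)))
         = (\<Sum>a\<le>k. \<Sum>b\<le>k. C1 a b * x ^ a * y ^ b)"
proof -
  define f where "f s = (\<Sum>b\<le>k. C1 0 b * y ^ b)
      - (\<Sum>a\<le>k. \<Sum>b\<le>k. C2 a b / real (Suc a) * s ^ Suc a * (real b * y ^ (b - 1)))
      - (\<Sum>a\<le>k. \<Sum>b\<le>k. C1 a b * s ^ a * y ^ b)" for s
  have "(f has_real_derivative 0) (at s)" for s
  proof -
    let ?u1x = "\<Sum>a\<le>k. \<Sum>b\<le>k. C1 a b * (real a * s ^ (a - 1)) * y ^ b"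
    let ?u2y = "\<Sum>a\<le>k. \<Sum>b\<le>k. C2 a b * s ^ a * (real b * y ^ (b - 1))"
    have "(f has_real_derivative - ?u2y - ?u1x) (at s)"
      unfolding f_def
      by (rule derivative_eq_intros double_sum_has_derivative_x refl | simp)+
         (simp add: sum_negf algebra_simps del: of_nat_Suc)
    moreover have "- ?u2y - ?u1x = 0" using assms[of s y] by linarith
    ultimately show ?thesis by metis
  qed
  then have "f x = f 0" using DERIV_isconst_all by blast
  also have "f 0 = 0" by (simp add: f_def sum.atMost_shift)
  finally show ?thesis by (simp add: f_def)
qed

lemma divfree_stream_function:
  assumes "vpoly k u" "divfree u"
  obtains \<psi> where "\<forall>z. (\<psi> has_derivative (\<lambda>h. fst (u z) * snd h - snd (u z) * fst h)) (at z)"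
proof -
  obtain C1 where C1: "(\<lambda>p. fst (u p)) = (\<lambda>z. \<Sum>a\<le>k. \<Sum>b\<le>k. C1 a b * fst z ^ a * snd z ^ b)"
    using assms(1) unfolding vpoly_def by (blast elim: is_poly2_square_form)
  obtain C2 where C2: "(\<lambda>p. snd (u p)) = (\<lambda>z. \<Sum>a\<le>k. \<Sum>b\<le>k. C2 a b * fst z ^ a * snd z ^ b)"
    using assms(1) unfolding vpoly_def by (blast elim: is_poly2_square_form)
  have u1: "fst (u (x, y)) = (\<Sum>a\<le>k. \<Sum>b\<le>k. C1 a b * x ^ a * y ^ b)"
    and u2: "snd (u (x, y)) = (\<Sum>a\<le>k. \<Sum>b\<le>k. C2 a b * x ^ a * y ^ b)" for x y
    using fun_cong[OF C1, of "(x, y)"] fun_cong[OF C2, of "(x, y)"] by simp_all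
  have div: "(\<Sum>a\<le>k. \<Sum>b\<le>k. C1 a b * (real a * x ^ (a - 1)) * y ^ b)
      + (\<Sum>a\<le>k. \<Sum>b\<le>k. C2 a b * x ^ a * (real b * y ^ (b - 1))) = 0" for x y
    using assms(2) unfolding divfree_def divergence_def
    by (simp add: u1 u2 DERIV_imp_deriv[OF double_sum_has_derivative_x]
        DERIV_imp_deriv[OF double_sum_has_derivative_y])
  \<comment> \<open>\<open>\<psi>(x, y) = \<integral>\<^sub>0\<^sup>y u\<^sub>1(0, s) ds - \<integral>\<^sub>0\<^sup>x u\<^sub>2(s, y) ds\<close>\<close>
  define \<psi> where "\<psi> z = (\<Sum>b\<le>k. C1 0 b / real (Suc b) * snd z ^ Suc b)
      - (\<Sum>a\<le>k. \<Sum>b\<le>k. C2 a b / real (Suc a) * fst z ^ Suc a * snd z ^ b)" for z :: "real \<times> real"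
  have \<psi>_deriv: "(\<psi> has_derivative (\<lambda>h. ((\<Sum>b\<le>k. C1 0 b * snd z ^ b)
      - (\<Sum>a\<le>k. \<Sum>b\<le>k. C2 a b / real (Suc a) * fst z ^ Suc a * (real b * snd z ^ (b - 1)))) * snd h
      - snd (u z) * fst h)) (at z)" for z
    unfolding \<psi>_def
    by (rule derivative_eq_intros refl | simp)+
       (simp add: fun_eq_iff u2[of "fst z" "snd z", simplified] sum_subtractf sum.distrib
         sum_distrib_left sum_distrib_right algebra_simps del: of_nat_Suc)
  have "(\<psi> has_derivative (\<lambda>h. fst (u z) * snd h - snd (u z) * fst h)) (at z)" for z
    using \<psi>_deriv[of z]
    unfolding divfree_coefficient_identity[OF div] u1[of "fst z" "snd z", symmetric] by simp
  then show ?thesis using that by blast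
qed

lemma gam_affine_form: "gam e t = gam e 0 + t *\<^sub>R (gam e 1 - gam e 0)"
  by (cases e) auto

lemma elen_mult_ntrace:
  "elen e * ntrace u e t
     = fst (u (gam e t)) * snd (gam e 1 - gam e 0) - snd (u (gam e t)) * fst (gam e 1 - gam e 0)"
  by (cases e) (simp_all add: ntrace_def inner_prod_def field_simps)

lemma stream_function_edge_derivative:
  assumes "\<forall>z. (\<psi> has_derivative (\<lambda>h. fst (u z) * snd h - snd (u z) * fst h)) (at z)"
  shows "((\<lambda>t. \<psi> (gam e t)) has_real_derivative elen e * ntrace u e t) (at t)"
proof -
  let ?\<tau> = "gam e 1 - gam e 0"
  have "((\<lambda>t. gam e 0 + t *\<^sub>R ?\<tau>) has_derivative (\<lambda>h. h *\<^sub>R ?\<tau>)) (at t)"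
    by (auto intro!: derivative_eq_intros)
  then have "(gam e has_derivative (\<lambda>h. h *\<^sub>R ?\<tau>)) (at t)"
    by (simp add: gam_affine_form[symmetric])
  from diff_chain_at[OF this assms[rule_format, of "gam e t"]]
  have "((\<psi> \<circ> gam e) has_derivative
      (\<lambda>h. fst (u (gam e t)) * snd h - snd (u (gam e t)) * fst h) \<circ> (\<lambda>h. h *\<^sub>R ?\<tau>)) (at t)" .
  moreover have "(\<lambda>h. fst (u (gam e t)) * snd h - snd (u (gam e t)) * fst h) \<circ> (\<lambda>h. h *\<^sub>R ?\<tau>)
      = (*) (elen e * ntrace u e t)"
    by (simp add: fun_eq_iff elen_mult_ntrace algebra_simps)
  ultimately show ?thesis by (simp add: has_field_derivative_def o_def)
qed

lemma flux_zero:
  assumes "vpoly k u" "divfree u"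
  shows "(\<Sum>e\<in>edges. elen e * integral {0..1} (ntrace u e)) = 0"
proof -
  obtain \<psi> where \<psi>: "\<forall>z. (\<psi> has_derivative (\<lambda>h. fst (u z) * snd h - snd (u z) * fst h)) (at z)"
    using assms by (rule divfree_stream_function)
  have "elen e * integral {0..1} (ntrace u e) = \<psi> (gam e 1) - \<psi> (gam e 0)" for e
  proof -
    have "((\<lambda>t. elen e * ntrace u e t) has_integral \<psi> (gam e 1) - \<psi> (gam e 0)) {0..1}"
      by (intro fundamental_theorem_of_calculus)
         (auto intro!: has_real_derivative_iff_has_vector_derivative[THEN iffD1]
           DERIV_subset[OF stream_function_edge_derivative[OF \<psi>]])
    then have "integral {0..1} (\<lambda>t. elen e * ntrace u e t) = \<psi> (gam e 1) - \<psi> (gam e 0)"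
      by (rule integral_unique)
    then show ?thesis by simp
  qed
  \<comment> \<open>The edges form a closed polygon, so the increments of \<open>\<psi>\<close> telescope.\<close>
  then show ?thesis by (simp add: edges_def)
qed

section \<open>Orthogonal projection onto \<open>\<Phi>\<^sub>k\<close>\<close>

locale symmetric_definite_form = vector_space scale
  for scale :: "'a::field \<Rightarrow> 'b::ab_group_add \<Rightarrow> 'b" (infixr \<open>*s\<close> 75) +
  fixes V :: "'b set" and F :: "'b \<Rightarrow> 'b \<Rightarrow> 'a"
  assumes subspace_V: "subspace V"
    and add_left: "x \<in> V \<Longrightarrow> y \<in> V \<Longrightarrow> z \<in> V \<Longrightarrow> F (x + y) z = F x z + F y z"
    and scale_left: "x \<in> V \<Longrightarrow> z \<in> V \<Longrightarrow> F (c *s x) z = c * F x z"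
    and commute: "x \<in> V \<Longrightarrow> y \<in> V \<Longrightarrow> F x y = F y x"
    and definite: "x \<in> V \<Longrightarrow> F x x = 0 \<Longrightarrow> x = 0"
begin

lemma diff_left:
  assumes "x \<in> V" "y \<in> V" "z \<in> V"
  shows "F (x - y) z = F x z - F y z"
proof -
  have "(-1) *s y \<in> V" using subspace_V assms(2) by (rule subspace_scale)
  have "F (x - y) z = F (x + (-1) *s y) z" by simp
  also have "\<dots> = F x z + F ((-1) *s y) z"
    by (rule add_left[OF assms(1) \<open>(-1) *s y \<in> V\<close> assms(3)])
  also have "\<dots> = F x z - F y z"
    using scale_left[OF assms(2,3), of "-1"] by simp
  finally show ?thesis .
qed

lemma add_right: "x \<in> V \<Longrightarrow> y \<in> V \<Longrightarrow> z \<in> V \<Longrightarrow> F x (y + z) = F x y + F x z"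
  using subspace_V by (simp add: commute[of x] add_left subspace_add)

lemma scale_right: "x \<in> V \<Longrightarrow> z \<in> V \<Longrightarrow> F x (c *s z) = c * F x z"
  using subspace_V by (simp add: commute[of x] scale_left subspace_scale)

lemma orthogonal_span:
  assumes "x \<in> V" "B \<subseteq> V" "\<And>b. b \<in> B \<Longrightarrow> F x b = 0" "y \<in> span B"
  shows "F x y = 0"
proof -
  have "F x 0 = 0" using scale_right[OF assms(1) assms(1), of 0] by simp
  then have "subspace {y \<in> V. F x y = 0}"
    unfolding subspace_def using subspace_V assms(1)
    by (simp add: subspace_0 subspace_add subspace_scale add_right scale_right)
  then show ?thesis
    using span_subspace_induct[OF assms(4)] assms(2,3) by blast
qed

lemma orthogonal_projection_exists:
  assumes "finite B" "B \<subseteq> V" "w \<in> V"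
  shows "\<exists>s\<in>span B. \<forall>b\<in>B. F (w - s) b = 0"
  using assms
proof (induction B arbitrary: w rule: finite_induct)
  case empty
  then show ?case by (auto intro: span_zero)
next
  case (insert b B)
  have span_V: "span B \<subseteq> V" using insert.prems(1) subspace_V by (simp add: span_minimal)
  have "b \<in> V" using insert.prems(1) by simp
  obtain s1 where s1: "s1 \<in> span B" "\<And>c. c \<in> B \<Longrightarrow> F (w - s1) c = 0"
    using insert.IH[OF _ insert.prems(2)] insert.prems(1) by blast
  obtain s2 where s2: "s2 \<in> span B" "\<And>c. c \<in> B \<Longrightarrow> F (b - s2) c = 0"
    using insert.IH[OF _ \<open>b \<in> V\<close>] insert.prems(1) by blast
  define b' where "b' = b - s2"
  have V: "s1 \<in> V" "s2 \<in> V" "b' \<in> V" "w - s1 \<in> V"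
    using s1(1) s2(1) span_V \<open>b \<in> V\<close> insert.prems(2) subspace_V
    by (auto simp: b'_def intro: subspace_diff)
  have in_span: "s1 \<in> span (insert b B)" "b' \<in> span (insert b B)"
    using s1(1) s2(1) span_mono[of B "insert b B"]
    by (auto simp: b'_def intro: span_diff span_base)
  show ?case
  proof (cases "F b' b' = 0")
    case True
    then have "b = s2" using definite[OF V(3)] by (simp add: b'_def)
    then have "F (w - s1) b = 0"
      using orthogonal_span[OF V(4) _ s1(2) s2(1)] insert.prems(1) by auto
    then show ?thesis using in_span(1) s1(2) by auto
  next
    case False
    define \<tau> where "\<tau> = F (w - s1) b' / F b' b'"
    define s where "s = s1 + \<tau> *s b'"
    have ws: "w - s = (w - s1) - \<tau> *s b'" by (simp add: s_def algebra_simps)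
    have \<tau>V: "\<tau> *s b' \<in> V" by (rule subspace_scale[OF subspace_V V(3)])
    have perp_B: "F (w - s) c = 0" if "c \<in> B" for c
    proof -
      have "c \<in> V" using that insert.prems(1) by auto
      have "F (w - s) c = F (w - s1) c - \<tau> * F b' c"
        unfolding ws diff_left[OF V(4) \<tau>V \<open>c \<in> V\<close>] scale_left[OF V(3) \<open>c \<in> V\<close>] ..
      then show ?thesis using s1(2)[OF that] s2(2)[OF that] by (simp add: b'_def)
    qed
    have "w - s \<in> V" unfolding ws by (rule subspace_diff[OF subspace_V V(4) \<tau>V])
    have "F (w - s) b' = F (w - s1) b' - \<tau> * F b' b'"
      unfolding ws diff_left[OF V(4) \<tau>V V(3)] scale_left[OF V(3) V(3)] ..
    then have "F (w - s) b' = 0"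
      using False by (simp add: \<tau>_def)
    moreover have "F (w - s) s2 = 0"
      using orthogonal_span[OF \<open>w - s \<in> V\<close> _ perp_B s2(1)] insert.prems(1) by auto
    moreover have "F (w - s) b = F (w - s) b' + F (w - s) s2"
      using add_right[OF \<open>w - s \<in> V\<close> V(3) V(2)] by (simp add: b'_def)
    ultimately have "F (w - s) b = 0" by simp
    moreover have "s \<in> span (insert b B)"
      using in_span by (simp add: s_def span_add span_scale)
    ultimately show ?thesis using perp_B by auto
  qed
qed

end

interpretation fun_vector: vector_space "\<lambda>(r::real) (u::'a \<Rightarrow> 'b::real_vector) p. r *\<^sub>R u p"
  by unfold_locales (simp_all add: fun_eq_iff scaleR_add_right scaleR_add_left)

lemma sum_fun_apply: "(\<Sum>i\<in>I. f i) x = (\<Sum>i\<in>I. f i x)"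
  by (induction I rule: infinite_finite_induct) simp_all

lemma compact_Khat: "compact Khat"
proof -
  have Khat_eq: "Khat = {p. 0 \<le> fst p} \<inter> {p. 0 \<le> snd p} \<inter> {p. fst p + snd p \<le> 1}"
    unfolding Khat_def by auto
  have "closed Khat"
    unfolding Khat_eq by (intro closed_Int closed_Collect_le continuous_intros)
  moreover have "Khat \<subseteq> cbox (0, 0) (1, 1)"
    unfolding Khat_def by (auto simp: cbox_Pair_iff)
  then have "bounded Khat" by (metis bounded_cbox bounded_subset)
  ultimately show ?thesis by (simp add: compact_eq_bounded_closed)
qed

lemma continuous_integrable_on_Khat:
  fixes f :: "real \<times> real \<Rightarrow> real"
  assumes "continuous_on UNIV f"
  shows "f integrable_on Khat"
proof -
  have "set_integrable lborel Khat f"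
    unfolding set_integrable_def
    by (rule borel_integrable_compact[OF compact_Khat]) (use assms continuous_on_subset in blast)
  then show ?thesis by (rule set_borel_integral_eq_integral(1))
qed

lemma L2K_add_left:
  assumes "continuous_on UNIV u" "continuous_on UNIV v" "continuous_on UNIV w"
  shows "L2K (\<lambda>p. u p + v p) w = L2K u w + L2K v w"
  using assms unfolding L2K_def
  by (simp add: inner_add_left integral_add continuous_integrable_on_Khat continuous_on_inner)

lemma L2K_diff_left:
  assumes "continuous_on UNIV u" "continuous_on UNIV v" "continuous_on UNIV w"
  shows "L2K (\<lambda>p. u p - v p) w = L2K u w - L2K v w"
  using assms unfolding L2K_def
  by (simp add: inner_diff_left integral_diff continuous_integrable_on_Khat continuous_on_inner)

lemma L2K_scaleR_left: "L2K (\<lambda>p. r *\<^sub>R u p) w = r * L2K u w"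
  unfolding L2K_def by simp

lemma L2K_commute: "L2K u w = L2K w u"
  unfolding L2K_def by (simp add: inner_commute)

lemma L2K_self_eq_0:
  assumes "vpoly k u" "L2K u u = 0"
  shows "u = (\<lambda>p. 0)"
proof -
  define h where "h p = u p \<bullet> u p" for p
  have h_cont: "continuous_on UNIV h"
    unfolding h_def using vpoly_continuous[OF assms(1)] by (intro continuous_on_inner)
  let ?Q = "cbox (0::real, 0::real) (1/2, 1/2)"
  have "?Q \<subseteq> Khat" unfolding Khat_def by (auto simp: cbox_Pair_iff)
  then have "integral ?Q h \<le> integral Khat h"
    using h_cont continuous_integrable_on_Khat
    by (intro integral_subset_le integrable_continuous)
       (auto simp: h_def intro: continuous_on_subset)
  also have "\<dots> = 0" using assms(2) unfolding L2K_def h_def by simp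
  finally have "integral ?Q h = 0"
    using integral_nonneg[of h ?Q] integrable_continuous[OF continuous_on_subset[OF h_cont]]
    by (simp add: h_def)
  then have "h q = 0" if "q \<in> ?Q" for q
    using that continuous_nonneg_integral_0_imp_0[of "(0, 0)" "(1/2, 1/2)" h q] h_cont
    by (auto simp: h_def box_ne_empty Basis_prod_def intro: continuous_on_subset)
  then have "fst (u (x, y)) = 0 \<and> snd (u (x, y)) = 0" if "x \<in> {0..1/2}" "y \<in> {0..1/2}" for x y
    using that by (auto simp: h_def cbox_Pair_iff inner_prod_def)
  moreover have "infinite {0..1/2 :: real}" by (simp add: infinite_Icc)
  ultimately have "fst (u p) = 0" "snd (u p) = 0" for p
    using assms(1)
      is_poly2_eq_0[of k "\<lambda>p. fst (u p)" "{0..1/2}" "{0..1/2}" p]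
      is_poly2_eq_0[of k "\<lambda>p. snd (u p)" "{0..1/2}" "{0..1/2}" p]
    by (simp_all add: vpoly_def)
  then show ?thesis by (simp add: fun_eq_iff prod_eq_iff)
qed

definition monomial_fields :: "nat \<Rightarrow> (real \<times> real \<Rightarrow> real \<times> real) set" where
  "monomial_fields k =
     (\<Union>a\<le>k. \<Union>b\<le>k. {\<lambda>z. (fst z ^ a * snd z ^ b, 0), \<lambda>z. (0, fst z ^ a * snd z ^ b)})"

lemma finite_monomial_fields: "finite (monomial_fields k)"
  by (simp add: monomial_fields_def)

lemma vpoly_in_span_monomial_fields:
  assumes "vpoly k u"
  shows "u \<in> fun_vector.span (monomial_fields k)"
proof -
  obtain C1 where C1: "(\<lambda>p. fst (u p)) = (\<lambda>z. \<Sum>a\<le>k. \<Sum>b\<le>k. C1 a b * fst z ^ a * snd z ^ b)"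
    using assms unfolding vpoly_def by (blast elim: is_poly2_square_form)
  obtain C2 where C2: "(\<lambda>p. snd (u p)) = (\<lambda>z. \<Sum>a\<le>k. \<Sum>b\<le>k. C2 a b * fst z ^ a * snd z ^ b)"
    using assms unfolding vpoly_def by (blast elim: is_poly2_square_form)
  define m where
    "m a b = (\<lambda>z::real \<times> real. (C1 a b * fst z ^ a * snd z ^ b, C2 a b * fst z ^ a * snd z ^ b))"
    for a b
  have "(\<Sum>a\<le>k. \<Sum>b\<le>k. m a b) \<in> fun_vector.span (monomial_fields k)"
  proof (intro fun_vector.span_sum)
    fix a b assume "a \<in> {..k}" "b \<in> {..k}"
    then have "(\<lambda>z. (fst z ^ a * snd z ^ b, 0::real)) \<in> monomial_fields k"
      "(\<lambda>z. (0::real, fst z ^ a * snd z ^ b)) \<in> monomial_fields k"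
      by (auto simp: monomial_fields_def)
    then have "(\<lambda>p. C1 a b *\<^sub>R (fst p ^ a * snd p ^ b, 0::real))
        + (\<lambda>p. C2 a b *\<^sub>R (0::real, fst p ^ a * snd p ^ b)) \<in> fun_vector.span (monomial_fields k)"
      by (intro fun_vector.span_add fun_vector.span_scale fun_vector.span_base)
    then show "m a b \<in> fun_vector.span (monomial_fields k)"
      by (simp add: m_def plus_fun_def mult.assoc)
  qed
  moreover have "(\<Sum>a\<le>k. \<Sum>b\<le>k. m a b) = u"
  proof
    fix p
    show "(\<Sum>a\<le>k. \<Sum>b\<le>k. m a b) p = u p"
      using fun_cong[OF C1, of p] fun_cong[OF C2, of p]
      by (simp add: sum_fun_apply m_def prod_eq_iff fst_sum snd_sum)
  qed
  ultimately show ?thesis by simp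
qed

lemma subspace_Phi: "fun_vector.subspace (Phi k)"
  unfolding fun_vector.subspace_def Phi_def
  by (auto simp: zero_fun_def plus_fun_def vpoly_const vpoly_add vpoly_scaleR divfree_const
      divfree_add divfree_scaleR ntrace_const ntrace_add ntrace_scaleR)

lemma L2K_symmetric_definite_form:
  "symmetric_definite_form (\<lambda>(r::real) u p. r *\<^sub>R u p) {u. vpoly k u} L2K"
proof (intro symmetric_definite_form.intro symmetric_definite_form_axioms.intro)
  show "vector_space (\<lambda>(r::real) (u::real \<times> real \<Rightarrow> real \<times> real) p. r *\<^sub>R u p)"
    by (rule fun_vector.vector_space_axioms)
  show "fun_vector.subspace {u. vpoly k u}"
    unfolding fun_vector.subspace_def
    by (simp add: zero_fun_def plus_fun_def vpoly_const vpoly_add vpoly_scaleR)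
next
  fix u v w :: "real \<times> real \<Rightarrow> real \<times> real"
  assume "u \<in> {u. vpoly k u}" "v \<in> {u. vpoly k u}" "w \<in> {u. vpoly k u}"
  then show "L2K (u + v) w = L2K u w + L2K v w"
    unfolding plus_fun_def by (intro L2K_add_left) (simp_all add: vpoly_continuous)
next
  fix u :: "real \<times> real \<Rightarrow> real \<times> real"
  assume "u \<in> {u. vpoly k u}" "L2K u u = 0"
  then show "u = 0" using L2K_self_eq_0 by (simp add: zero_fun_def)
next
  fix u w :: "real \<times> real \<Rightarrow> real \<times> real" and c :: real
  show "L2K (\<lambda>p. c *\<^sub>R u p) w = c * L2K u w" by (rule L2K_scaleR_left)
  show "L2K u w = L2K w u" by (rule L2K_commute)
qed

lemma Phi_orthogonal_projection:
  assumes "vpoly k w"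
  obtains s where "s \<in> Phi k" "\<forall>\<phi>\<in>Phi k. L2K (\<lambda>p. w p - s p) \<phi> = 0"
proof -
  interpret L2K_form: symmetric_definite_form "\<lambda>(r::real) u p. r *\<^sub>R u p" "{u. vpoly k u}" L2K
    by (rule L2K_symmetric_definite_form)
  obtain B where B: "B \<subseteq> Phi k" "fun_vector.independent B" "Phi k \<subseteq> fun_vector.span B"
    and "card B = fun_vector.dim (Phi k)"
    by (rule fun_vector.basis_exists)
  have "Phi k \<subseteq> fun_vector.span (monomial_fields k)"
    using vpoly_in_span_monomial_fields by (auto simp: Phi_def)
  with B(1) have "B \<subseteq> fun_vector.span (monomial_fields k)" by (rule order_trans)
  then have "finite B"
    using fun_vector.independent_span_bound[OF finite_monomial_fields B(2)] by simp
  have B_vpoly: "B \<subseteq> {u. vpoly k u}" using B(1) by (auto simp: Phi_def)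
  have "w \<in> {u. vpoly k u}" using assms by simp
  then obtain s where s: "s \<in> fun_vector.span B" "\<forall>b\<in>B. L2K (w - s) b = 0"
    using L2K_form.orthogonal_projection_exists[OF \<open>finite B\<close> B_vpoly] by blast
  have "s \<in> Phi k"
    using s(1) fun_vector.span_minimal[OF B(1) subspace_Phi] by blast
  then have "w - s \<in> {u. vpoly k u}"
    using assms by (simp add: Phi_def fun_diff_def vpoly_diff)
  have "L2K (\<lambda>p. w p - s p) \<phi> = 0" if "\<phi> \<in> Phi k" for \<phi>
    using L2K_form.orthogonal_span[OF \<open>w - s \<in> {u. vpoly k u}\<close> B_vpoly] s(2) B(3) that
    by (simp add: fun_diff_def subset_eq)
  with \<open>s \<in> Phi k\<close> show ?thesis using that by blast
qed

section \<open>Divergence-free fields with a single Legendre mode as normal trace\<close>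

lemma is_poly2_poly_snd: "degree g \<le> k \<Longrightarrow> is_poly2 k (\<lambda>z. poly g (snd z))"
  using is_poly2_swap[OF is_poly2_poly_fst] by simp

lemma is_poly2_fst_mult_poly_snd: "degree h < k \<Longrightarrow> is_poly2 k (\<lambda>z. fst z * poly h (snd z))"
  using is_poly2_swap[OF is_poly2_snd_mult_poly_fst] by simp

lemma mem_edges [simp]: "e \<in> edges"
  by (cases e) (simp_all add: edges_def)

lemma finite_edges: "finite edges"
  by (simp add: edges_def)

lemma divfree_intro:
  assumes "\<And>x y. ((\<lambda>s. fst (u (s, y))) has_real_derivative Dx x y) (at x)"
    and "\<And>x y. ((\<lambda>s. snd (u (x, s))) has_real_derivative Dy x y) (at y)"
    and "\<And>x y. Dx x y + Dy x y = 0"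
  shows "divfree u"
  unfolding divfree_def
proof
  fix p :: "real \<times> real"
  show "divergence u p = 0"
    using DERIV_imp_deriv[OF assms(1)] DERIV_imp_deriv[OF assms(2)] assms(3)
    by (simp add: divergence_def)
qed

text \<open>The curls \<open>(\<partial>\<^sub>y \<psi>, -\<partial>\<^sub>x \<psi>)\<close> of the stream functions \<open>(1 - x - y) G(x)\<close>, \<open>(1 - x - y) G(y)\<close>
  and \<open>x G(y)\<close>. If \<open>G(0) = 0\<close>, each stream function vanishes on two edges, so the normal trace
  lives on the third one, where it is the tangential derivative \<open>S = ((1 - s) G)'\<close>.\<close>
definition bottom_field :: "real poly \<Rightarrow> real poly \<Rightarrow> real \<times> real \<Rightarrow> real \<times> real" where
  "bottom_field G S = (\<lambda>z. (- poly G (fst z), - poly S (fst z) + snd z * poly (pderiv G) (fst z)))"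

definition left_field :: "real poly \<Rightarrow> real poly \<Rightarrow> real \<times> real \<Rightarrow> real \<times> real" where
  "left_field G S = (\<lambda>z. (poly S (snd z) - fst z * poly (pderiv G) (snd z), poly G (snd z)))"

definition hyp_field :: "real poly \<Rightarrow> real \<times> real \<Rightarrow> real \<times> real" where
  "hyp_field G = (\<lambda>z. (fst z * poly (pderiv G) (snd z), - poly G (snd z)))"

locale edge_profile =
  fixes k :: nat and G S :: "real poly"
  assumes degree_G: "degree G \<le> k" and degree_pderiv_G: "degree (pderiv G) < k"
    and degree_S: "degree S \<le> k" and G_0: "poly G 0 = 0"
    and S_eq: "\<And>s. poly S s = (1 - s) * poly (pderiv G) s - poly G s"
begin

lemma bottom_field:
  "vpoly k (bottom_field G S)" "divfree (bottom_field G S)"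
  "ntrace (bottom_field G S) e t = (if e = Bottom then poly S t else 0)"
proof -
  have "is_poly2 k (\<lambda>z. poly (- S) (fst z) + snd z * poly (pderiv G) (fst z))"
    using degree_S degree_pderiv_G
    by (intro is_poly2_add is_poly2_poly_fst is_poly2_snd_mult_poly_fst) auto
  moreover have "is_poly2 k (\<lambda>z. poly (- G) (fst z))"
    using degree_G by (intro is_poly2_poly_fst) simp
  ultimately show "vpoly k (bottom_field G S)"
    by (simp add: vpoly_def bottom_field_def)
  show "divfree (bottom_field G S)"
    by (rule divfree_intro[where Dx = "\<lambda>x y. - poly (pderiv G) x"
          and Dy = "\<lambda>x y. poly (pderiv G) x"])
       (auto simp: bottom_field_def intro!: derivative_eq_intros)
  have "t * poly (pderiv G) (1 - t) - poly G (1 - t) - poly S (1 - t) = 0"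
    using S_eq[of "1 - t"] by simp
  then show "ntrace (bottom_field G S) e t = (if e = Bottom then poly S t else 0)"
    using G_0 by (cases e) (simp_all add: ntrace_def bottom_field_def inner_prod_def field_simps)
qed

lemma left_field:
  "vpoly k (left_field G S)" "divfree (left_field G S)"
  "ntrace (left_field G S) e t = (if e = Left then - poly S (1 - t) else 0)"
proof -
  have "is_poly2 k (\<lambda>z. poly S (snd z) + fst z * poly (- pderiv G) (snd z))"
    using degree_S degree_pderiv_G
    by (intro is_poly2_add is_poly2_poly_snd is_poly2_fst_mult_poly_snd) auto
  moreover have "is_poly2 k (\<lambda>z. poly G (snd z))"
    using degree_G by (rule is_poly2_poly_snd)
  ultimately show "vpoly k (left_field G S)"
    by (simp add: vpoly_def left_field_def)
  show "divfree (left_field G S)"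
    by (rule divfree_intro[where Dx = "\<lambda>x y. - poly (pderiv G) y"
          and Dy = "\<lambda>x y. poly (pderiv G) y"])
       (auto simp: left_field_def intro!: derivative_eq_intros)
  show "ntrace (left_field G S) e t = (if e = Left then - poly S (1 - t) else 0)"
    using S_eq[of t] G_0
    by (cases e) (simp_all add: ntrace_def left_field_def inner_prod_def field_simps)
qed

lemma hyp_field:
  "vpoly k (hyp_field G)" "divfree (hyp_field G)"
  "ntrace (hyp_field G) e t = (if e = Hyp then poly S t / sqrt 2 else 0)"
proof -
  have "is_poly2 k (\<lambda>z. fst z * poly (pderiv G) (snd z))"
    using degree_pderiv_G by (rule is_poly2_fst_mult_poly_snd)
  moreover have "is_poly2 k (\<lambda>z. poly (- G) (snd z))"
    using degree_G by (intro is_poly2_poly_snd) simp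
  ultimately show "vpoly k (hyp_field G)"
    by (simp add: vpoly_def hyp_field_def)
  show "divfree (hyp_field G)"
    by (rule divfree_intro[where Dx = "\<lambda>x y. poly (pderiv G) y"
          and Dy = "\<lambda>x y. - poly (pderiv G) y"])
       (auto simp: hyp_field_def intro!: derivative_eq_intros)
  have "ntrace (hyp_field G) Hyp t = ((1 - t) * poly (pderiv G) t - poly G t) / sqrt 2"
    by (simp add: ntrace_def hyp_field_def inner_prod_def divide_inverse algebra_simps)
  then show "ntrace (hyp_field G) e t = (if e = Hyp then poly S t / sqrt 2 else 0)"
    using G_0 by (cases e) (simp_all add: ntrace_def hyp_field_def inner_prod_def S_eq)
qed

end

lemma edge_profile_intro:
  assumes "degree D < k" "degree P \<le> k" "\<And>s. poly (pderiv ([:0, 1, -1:] * D)) s = poly P s"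
  shows "edge_profile k ([:0, 1:] * D) P"
proof
  have "degree ([:0, 1:] * D) \<le> degree D + 1"
    using degree_mult_le[of "[:0, 1::real:]" D] by simp
  then show "degree ([:0, 1:] * D) \<le> k" and "degree (pderiv ([:0, 1:] * D)) < k"
    using assms(1) by (auto simp: degree_pderiv)
  show "degree P \<le> k" by (rule assms(2))
  show "poly ([:0, 1:] * D) 0 = 0" by simp
  fix s
  \<comment> \<open>\<open>(s - s\<^sup>2) D = (1 - s) G\<close> for \<open>G = s D\<close>.\<close>
  have "[:0, 1, -1:] * D = [:1, -1:] * ([:0, 1:] * D)" by (simp add: algebra_simps)
  then have eq: "pderiv ([:0, 1, -1:] * D)
      = [:1, -1:] * pderiv ([:0, 1:] * D) + ([:0, 1:] * D) * pderiv [:1, -1:]"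
    by (simp only: pderiv_mult)
  have "poly (pderiv ([:0, 1, -1:] * D)) s
      = (1 - s) * poly (pderiv ([:0, 1:] * D)) s - poly ([:0, 1:] * D) s"
    unfolding eq by (simp add: pderiv_pCons algebra_simps)
  with assms(3)
  show "poly P s = (1 - s) * poly (pderiv ([:0, 1:] * D)) s - poly ([:0, 1:] * D) s"
    by simp
qed

definition legendre_potential :: "nat \<Rightarrow> real poly" where
  "legendre_potential i = smult (-1 / (real i * (real i + 1))) (pderiv (shifted_legendre i))"

lemma degree_legendre_potential: "degree (legendre_potential i) \<le> i - 1"
  unfolding legendre_potential_def
  using degree_smult_le[of _ "pderiv (shifted_legendre i)"]
  by (simp add: degree_pderiv degree_shifted_legendre)

lemma pderiv_weighted_legendre_potential:
  assumes "1 \<le> i"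
  shows "poly (pderiv ([:0, 1, -1:] * legendre_potential i)) s = poly (shifted_legendre i) s"
proof -
  define c where "c = -1 / (real i * (real i + 1))"
  have "[:0, 1, -1:] * legendre_potential i = smult c ([:0, 1, -1:] * pderiv (shifted_legendre i))"
    unfolding legendre_potential_def c_def by (simp only: mult_smult_right)
  then have "poly (pderiv ([:0, 1, -1:] * legendre_potential i)) s
      = c * poly (pderiv ([:0, 1, -1:] * pderiv (shifted_legendre i))) s"
    by (simp only: pderiv_smult poly_smult)
  also have "\<dots> = poly (shifted_legendre i) s"
    unfolding shifted_legendre_ode using assms by (simp add: c_def)
  finally show ?thesis .
qed

lemma edge_profile_shifted_legendre:
  assumes "1 \<le> i" "i \<le> k"
  shows "edge_profile k ([:0, 1:] * legendre_potential i) (shifted_legendre i)"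
  using assms degree_legendre_potential[of i]
  by (intro edge_profile_intro pderiv_weighted_legendre_potential)
     (auto simp: degree_shifted_legendre)

lemma edge_profile_reflected_shifted_legendre:
  assumes "1 \<le> i" "i \<le> k"
  shows "edge_profile k ([:0, 1:] * (legendre_potential i \<circ>\<^sub>p [:1, -1:]))
           (- (shifted_legendre i \<circ>\<^sub>p [:1, -1:]))"
proof (rule edge_profile_intro)
  show "degree (legendre_potential i \<circ>\<^sub>p [:1, -1:]) < k"
    using assms degree_legendre_potential[of i] by (simp add: degree_pcompose)
  show "degree (- (shifted_legendre i \<circ>\<^sub>p [:1, -1:])) \<le> k"
    using assms by (simp add: degree_pcompose degree_shifted_legendre)
  fix s :: real
  have "[:0, 1, -1:] \<circ>\<^sub>p [:1, -1:] = ([:0, 1, -1:] :: real poly)"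
    by (simp add: pcompose_pCons algebra_simps)
  then have "[:0, 1, -1:] * (legendre_potential i \<circ>\<^sub>p [:1, -1:])
      = ([:0, 1, -1:] * legendre_potential i) \<circ>\<^sub>p [:1, -1:]"
    by (simp only: pcompose_mult)
  then show "poly (pderiv ([:0, 1, -1:] * (legendre_potential i \<circ>\<^sub>p [:1, -1:]))) s
      = poly (- (shifted_legendre i \<circ>\<^sub>p [:1, -1:])) s"
    using pderiv_weighted_legendre_potential[OF assms(1), of "1 - s"]
    by (simp add: pderiv_pcompose poly_pcompose pderiv_pCons)
qed

lemma edge_field_exists:
  assumes "1 \<le> i" "i \<le> k"
  obtains w where "vpoly k w" "divfree w"
    "\<forall>e t. ntrace w e t = (if e = f then poly (shifted_legendre i) t else 0)"
proof (cases f)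
  case Bottom
  interpret edge_profile k "[:0, 1:] * legendre_potential i" "shifted_legendre i"
    using assms by (rule edge_profile_shifted_legendre)
  show ?thesis
    using bottom_field Bottom
    by (intro that[of "bottom_field ([:0, 1:] * legendre_potential i) (shifted_legendre i)"]) auto
next
  case Hyp
  interpret edge_profile k "[:0, 1:] * legendre_potential i" "shifted_legendre i"
    using assms by (rule edge_profile_shifted_legendre)
  show ?thesis
    using hyp_field Hyp
    by (intro that[of "\<lambda>p. sqrt 2 *\<^sub>R hyp_field ([:0, 1:] * legendre_potential i) p"])
       (auto simp: vpoly_scaleR divfree_scaleR ntrace_scaleR)
next
  case Left
  interpret edge_profile k "[:0, 1:] * (legendre_potential i \<circ>\<^sub>p [:1, -1:])"
    "- (shifted_legendre i \<circ>\<^sub>p [:1, -1:])"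
    using assms by (rule edge_profile_reflected_shifted_legendre)
  show ?thesis
    using left_field Left
    by (intro that[of "left_field ([:0, 1:] * (legendre_potential i \<circ>\<^sub>p [:1, -1:]))
                          (- (shifted_legendre i \<circ>\<^sub>p [:1, -1:]))"])
       (auto simp: poly_pcompose)
qed

lemma orthogonal_edge_field_exists:
  assumes "1 \<le> i" "i \<le> k"
  obtains z where "vpoly k z" "divfree z" "\<forall>\<phi>\<in>Phi k. L2K z \<phi> = 0"
    "\<forall>e. \<forall>t\<in>{0..1}. ntrace z e t = (if e = f then poly (shifted_legendre i) t else 0)"
proof -
  obtain w where w: "vpoly k w" "divfree w"
    "\<forall>e t. ntrace w e t = (if e = f then poly (shifted_legendre i) t else 0)"
    using assms by (rule edge_field_exists)
  obtain s where s: "s \<in> Phi k" "\<forall>\<phi>\<in>Phi k. L2K (\<lambda>p. w p - s p) \<phi> = 0"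
    using w(1) by (rule Phi_orthogonal_projection)
  have "vpoly k s" "divfree s" "\<forall>e. \<forall>t\<in>{0..1}. ntrace s e t = 0"
    using s(1) by (auto simp: Phi_def)
  then show ?thesis
    using w s(2)
    by (intro that[of "\<lambda>p. w p - s p"]) (auto simp: vpoly_diff divfree_diff ntrace_diff)
qed

section \<open>The decomposition\<close>

lemma L2B_single_edge:
  "L2B \<phi> (\<lambda>g t. if g = f then \<psi> t else 0) = elen f * integral {0..1} (\<lambda>t. \<phi> f t * \<psi> t)"
  unfolding L2B_def edges_def by (cases f) auto

lemma elen_pos: "elen e > 0"
  by (cases e) auto

lemma Lraw_eq: "Lraw f i = (\<lambda>g t. if g = f then poly (shifted_legendre i) t else 0)"
  by (auto simp: fun_eq_iff Lraw_def poly_shifted_legendre)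

lemma L2B_Leg_eq_0_iff:
  "L2B \<phi> (Leg f i) = 0 \<longleftrightarrow> integral {0..1} (\<lambda>t. \<phi> f t * poly (shifted_legendre i) t) = 0"
proof -
  define N where "N = L2B (Lraw f i) (Lraw f i)"
  have "N = elen f
      * integral {0..1} (\<lambda>t. poly (shifted_legendre i) t * poly (shifted_legendre i) t)"
    unfolding N_def
    by (subst (2) Lraw_eq) (simp add: L2B_single_edge Lraw_def poly_shifted_legendre)
  then have "N > 0" using elen_pos shifted_legendre_norm_pos by simp
  have "Leg f i = (\<lambda>g t. if g = f then poly (shifted_legendre i) t / sqrt N else 0)"
    by (auto simp: fun_eq_iff Leg_def N_def Lraw_eq)
  then have "L2B \<phi> (Leg f i)
      = elen f / sqrt N * integral {0..1} (\<lambda>t. \<phi> f t * poly (shifted_legendre i) t)"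
    by (simp add: L2B_single_edge)
  then show ?thesis using \<open>N > 0\<close> elen_pos[of f] by simp
qed

lemma ntrace_legendre_expansion:
  assumes "vpoly k u"
  obtains \<beta> where "\<forall>e t. ntrace u e t = (\<Sum>j\<le>k. \<beta> e j * poly (shifted_legendre j) t)"
proof -
  have "\<exists>c. \<forall>t. ntrace u e t = (\<Sum>j\<le>k. c j * poly (shifted_legendre j) t)" for e
  proof -
    obtain P where "degree P \<le> k" "ntrace u e = poly P"
      using assms by (rule ntrace_poly)
    with shifted_legendre_span show ?thesis by (fastforce simp: poly_sum)
  qed
  then show ?thesis using that by metis
qed

lemma orthogonal_edge_fields_exist:
  obtains z where "\<forall>f. \<forall>i\<in>{1..k}. vpoly k (z f i) \<and> divfree (z f i)
    \<and> (\<forall>\<phi>\<in>Phi k. L2K (z f i) \<phi> = 0)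
    \<and> (\<forall>e. \<forall>t\<in>{0..1}. ntrace (z f i) e t = (if e = f then poly (shifted_legendre i) t else 0))"
proof -
  define P where "P f i z \<longleftrightarrow> vpoly k z \<and> divfree z \<and> (\<forall>\<phi>\<in>Phi k. L2K z \<phi> = 0)
      \<and> (\<forall>e. \<forall>t\<in>{0..1}. ntrace z e t = (if e = f then poly (shifted_legendre i) t else 0))"
    for f i z
  have ex: "\<exists>z. P f i z" if "i \<in> {1..k}" for f i
  proof -
    from that have "1 \<le> i" "i \<le> k" by auto
    then obtain z where "vpoly k z" "divfree z" "\<forall>\<phi>\<in>Phi k. L2K z \<phi> = 0"
      "\<forall>e. \<forall>t\<in>{0..1}. ntrace z e t = (if e = f then poly (shifted_legendre i) t else 0)"
      by (rule orthogonal_edge_field_exists)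
    then show ?thesis by (auto simp: P_def)
  qed
  define z where "z f i = (SOME z. P f i z)" for f i
  have "P f i (z f i)" if "i \<in> {1..k}" for f i
    unfolding z_def using someI_ex[OF ex[OF that]] .
  then have "\<forall>f. \<forall>i\<in>{1..k}. P f i (z f i)" by blast
  then show ?thesis unfolding P_def by (rule that)
qed

lemma constant_field_matching_mean_fluxes:
  assumes "vpoly k u" "divfree u"
  obtains c where "\<forall>e. c \<bullet> nout e = integral {0..1} (ntrace u e)"
proof -
  let ?m = "\<lambda>e. integral {0..1} (ntrace u e)"
  have "?m Bottom + sqrt 2 * ?m Hyp + ?m Left = 0"
    using flux_zero[OF assms] by (simp add: edges_def)
  then have "(- ?m Left, - ?m Bottom) \<bullet> nout e = ?m e" for e
    by (cases e) (simp_all add: inner_prod_def field_simps)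
  then show ?thesis using that by blast
qed

lemma L2B_ntrace_Leg_eq_0:
  assumes "\<And>e t. t \<in> {0..1} \<Longrightarrow> ntrace w e t = (if e = f then a * poly (shifted_legendre i) t else 0)"
    and "(g, j) \<noteq> (f, i)"
  shows "L2B (ntrace w) (Leg g j) = 0"
proof -
  have "integral {0..1} (\<lambda>t. ntrace w g t * poly (shifted_legendre j) t)
      = integral {0..1} (\<lambda>t. if g = f
          then a * (poly (shifted_legendre i) t * poly (shifted_legendre j) t) else 0)"
    by (intro integral_cong) (simp add: assms(1))
  also have "\<dots> = 0"
    using assms(2) by (cases "g = f") (auto simp: shifted_legendre_orthogonal)
  finally show ?thesis by (simp add: L2B_Leg_eq_0_iff)
qed

lemma ntrace_edge_field_sum:
  assumes "\<And>f i. i \<in> {1..k} \<Longrightarrow> t \<in> {0..1} \<Longrightarrow>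
      ntrace (w f i) e t = (if e = f then \<beta> f i * poly (shifted_legendre i) t else 0)"
    and "t \<in> {0..1}"
  shows "ntrace (\<lambda>p. \<Sum>f\<in>edges. \<Sum>i=1..k. w f i p) e t
       = (\<Sum>i=1..k. \<beta> e i * poly (shifted_legendre i) t)"
proof -
  have "ntrace (\<lambda>p. \<Sum>f\<in>edges. \<Sum>i=1..k. w f i p) e t = (\<Sum>f\<in>edges. \<Sum>i=1..k. ntrace (w f i) e t)"
    by (simp add: ntrace_sum)
  also have "\<dots> = (\<Sum>f\<in>edges. if f = e then \<Sum>i=1..k. \<beta> e i * poly (shifted_legendre i) t else 0)"
    using assms by (intro sum.cong refl) auto
  finally show ?thesis by (simp add: sum.delta finite_edges)
qed

theorem existence:
  assumes "vpoly k u" "divfree u"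
  shows "\<exists>v0 v1 vf. is_decomp k u v0 v1 vf"
proof -
  let ?L = "\<lambda>j. poly (shifted_legendre j)"
  obtain \<beta> where "\<forall>e t. ntrace u e t = (\<Sum>j\<le>k. \<beta> e j * ?L j t)"
    using assms(1) by (rule ntrace_legendre_expansion)
  then have \<beta>: "ntrace u e = (\<lambda>t. \<Sum>j\<le>k. \<beta> e j * ?L j t)" for e by (simp add: fun_eq_iff)
  obtain c where "\<forall>e. c \<bullet> nout e = integral {0..1} (ntrace u e)"
    using assms by (rule constant_field_matching_mean_fluxes)
  then have c: "c \<bullet> nout e = \<beta> e 0" for e
    using integral_shifted_legendre_expansion[of 0 k "\<beta> e"] by (simp add: \<beta>)
  obtain z where z: "\<forall>f. \<forall>i\<in>{1..k}. vpoly k (z f i) \<and> divfree (z f i)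
      \<and> (\<forall>\<phi>\<in>Phi k. L2K (z f i) \<phi> = 0)
      \<and> (\<forall>e. \<forall>t\<in>{0..1}. ntrace (z f i) e t = (if e = f then ?L i t else 0))"
    by (rule orthogonal_edge_fields_exist)
  define vf where "vf f i = (\<lambda>p. \<beta> f i *\<^sub>R z f i p)" for f i
  define S where "S = (\<lambda>p. \<Sum>f\<in>edges. \<Sum>i=1..k. vf f i p)"
  define v0 where "v0 = (\<lambda>p. u p - c - S p)"
  have vf: "vpoly k (vf f i)" "divfree (vf f i)" "\<forall>\<phi>\<in>Phi k. L2K (vf f i) \<phi> = 0"
    "\<And>e t. t \<in> {0..1} \<Longrightarrow> ntrace (vf f i) e t = (if e = f then \<beta> f i * ?L i t else 0)"
    if "i \<in> {1..k}" for f i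
    using z that
    by (simp_all add: vf_def vpoly_scaleR divfree_scaleR[of k] L2K_scaleR_left ntrace_scaleR)
  have "vpoly k (\<lambda>p. \<Sum>i=1..k. vf f i p) \<and> divfree (\<lambda>p. \<Sum>i=1..k. vf f i p)" for f
    using vf by (auto intro!: vpoly_sum divfree_sum[of _ k])
  then have "vpoly k S" "divfree S"
    unfolding S_def by (simp_all add: vpoly_sum divfree_sum[OF finite_edges, of k])
  then have "vpoly k v0" "divfree v0"
    using assms by (simp_all add: v0_def vpoly_diff vpoly_const divfree_diff[of k] divfree_const)
  \<comment> \<open>The edge fields remove the higher Legendre modes of the normal trace, the constant its mean.\<close>
  moreover have "ntrace v0 e t = 0" if "t \<in> {0..1}" for e t
  proof -
    have "(\<Sum>j\<le>k. \<beta> e j * ?L j t) = \<beta> e 0 + (\<Sum>i=1..k. \<beta> e i * ?L i t)"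
      by (simp add: atMost_atLeast0 sum.atLeast_Suc_atMost)
    then show ?thesis
      using ntrace_edge_field_sum[OF vf(4) that]
      by (simp add: v0_def S_def ntrace_diff \<beta> c ntrace_const)
  qed
  ultimately have "v0 \<in> Phi k" by (simp add: Phi_def)
  moreover have "L2B (ntrace (vf f i)) (Leg g j) = 0" if "i \<in> {1..k}" "(g, j) \<noteq> (f, i)" for f i g j
    using vf(4)[OF that(1)] that(2) by (rule L2B_ntrace_Leg_eq_0)
  ultimately have "is_decomp k u v0 (\<lambda>p. c) vf"
    using vf by (auto simp: is_decomp_def v0_def S_def)
  then show ?thesis by blast
qed

lemma zero_if_orthogonal_to_Phi_and_moments_vanish:
  assumes "vpoly k d" "divfree d" "\<forall>\<phi>\<in>Phi k. L2K d \<phi> = 0"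
    and "\<And>g j. j \<le> k \<Longrightarrow> integral {0..1} (\<lambda>t. ntrace d g t * poly (shifted_legendre j) t) = 0"
  shows "d = (\<lambda>p. 0)"
proof -
  have "ntrace d g t = 0" for g t
  proof -
    obtain P where P: "degree P \<le> k" "ntrace d g = poly P"
      using assms(1) by (rule ntrace_poly)
    have "P = 0"
      using P assms(4)[of _ g] by (intro orthogonal_shifted_legendre_imp_zero[OF P(1)]) simp
    then show ?thesis using P(2) by simp
  qed
  then have "d \<in> Phi k" using assms(1,2) by (simp add: Phi_def)
  then have "L2K d d = 0" using assms(3) by blast
  then show ?thesis by (rule L2K_self_eq_0[OF assms(1)])
qed

lemma is_decompD:
  assumes "is_decomp k u v0 v1 vf"
  shows "u p = v0 p + v1 p + (\<Sum>f\<in>edges. \<Sum>i=1..k. vf f i p)"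
    and "v0 \<in> Phi k"
    and "\<exists>c. v1 = (\<lambda>p. c)"
    and "i \<in> {1..k} \<Longrightarrow> vpoly k (vf f i) \<and> divfree (vf f i) \<and> (\<forall>\<phi>\<in>Phi k. L2K (vf f i) \<phi> = 0)"
    and "i \<in> {1..k} \<Longrightarrow> j \<le> k \<Longrightarrow> (g, j) \<noteq> (f, i) \<Longrightarrow>
      integral {0..1} (\<lambda>t. ntrace (vf f i) g t * poly (shifted_legendre j) t) = 0"
proof -
  show "u p = v0 p + v1 p + (\<Sum>f\<in>edges. \<Sum>i=1..k. vf f i p)" "v0 \<in> Phi k"
    using assms unfolding is_decomp_def by blast+
  obtain c where "\<forall>p. v1 p = c" using assms unfolding is_decomp_def by blast
  then show "\<exists>c. v1 = (\<lambda>p. c)" by blast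
  assume "i \<in> {1..k}"
  then show "vpoly k (vf f i) \<and> divfree (vf f i) \<and> (\<forall>\<phi>\<in>Phi k. L2K (vf f i) \<phi> = 0)"
    using assms unfolding is_decomp_def by simp
  assume "j \<le> k" "(g, j) \<noteq> (f, i)"
  then show "integral {0..1} (\<lambda>t. ntrace (vf f i) g t * poly (shifted_legendre j) t) = 0"
    using assms \<open>i \<in> {1..k}\<close> unfolding is_decomp_def by (simp add: L2B_Leg_eq_0_iff)
qed

lemma sum_sum_eq_single:
  fixes h :: "'a \<Rightarrow> 'b \<Rightarrow> 'c::comm_monoid_add"
  assumes "finite A" "finite B" "a \<in> A" "b \<in> B"
    and "\<And>x y. x \<in> A \<Longrightarrow> y \<in> B \<Longrightarrow> (x, y) \<noteq> (a, b) \<Longrightarrow> h x y = 0"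
  shows "(\<Sum>x\<in>A. \<Sum>y\<in>B. h x y) = h a b"
proof -
  have "(\<Sum>x\<in>A. \<Sum>y\<in>B. h x y) = (\<Sum>(x, y)\<in>A \<times> B. h x y)"
    by (rule sum.cartesian_product)
  also have "\<dots> = (\<Sum>(x, y)\<in>{(a, b)}. h x y)"
    using assms by (intro sum.mono_neutral_right) auto
  finally show ?thesis by simp
qed

lemma decomp_edge_moment:
  assumes "is_decomp k u v0 v1 vf" "i \<in> {1..k}"
  shows "integral {0..1} (\<lambda>t. ntrace (vf f i) f t * poly (shifted_legendre i) t)
       = integral {0..1} (\<lambda>t. ntrace u f t * poly (shifted_legendre i) t)"
proof -
  let ?L = "poly (shifted_legendre i)"
  let ?m = "\<lambda>w. integral {0..1} (\<lambda>t. ntrace w f t * ?L t)"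
  obtain c where c: "v1 = (\<lambda>p. c)" using is_decompD(3)[OF assms(1)] by blast
  have vf: "vpoly k (vf g j)" and vf_perp: "(g, j) \<noteq> (f, i) \<Longrightarrow> ?m (vf g j) = 0"
    if "j \<in> {1..k}" for g j
    using is_decompD(4,5)[OF assms(1) that] assms(2) by auto
  have "ntrace v0 f t = 0" if "t \<in> {0..1}" for t
    using is_decompD(2)[OF assms(1)] that by (simp add: Phi_def)
  then have "ntrace u f t = c \<bullet> nout f + (\<Sum>g\<in>edges. \<Sum>j=1..k. ntrace (vf g j) f t)"
    if "t \<in> {0..1}" for t
    using that is_decompD(1)[OF assms(1)] unfolding ntrace_def c
    by (simp add: inner_add_left inner_sum_left)
  then have "?m u = integral {0..1} (\<lambda>t. (c \<bullet> nout f) * ?L t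
      + (\<Sum>g\<in>edges. \<Sum>j=1..k. ntrace (vf g j) f t * ?L t))"
    by (intro integral_cong) (simp add: distrib_right sum_distrib_right)
  also have "\<dots> = (c \<bullet> nout f) * integral {0..1} ?L + (\<Sum>g\<in>edges. \<Sum>j=1..k. ?m (vf g j))"
  proof -
    have int: "(\<lambda>t. ntrace (vf g j) f t * ?L t) integrable_on {0..1}" if "j \<in> {1..k}" for g j
      using vf[OF that] by (rule ntrace_mult_poly_integrable)
    have "(\<lambda>t. (c \<bullet> nout f) * ?L t) integrable_on {0..1}"
      by (intro integrable_continuous_real continuous_intros)
    moreover have "(\<lambda>t. \<Sum>g\<in>edges. \<Sum>j=1..k. ntrace (vf g j) f t * ?L t) integrable_on {0..1}"
      using int by (intro integrable_sum) (auto simp: finite_edges)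
    moreover have "integral {0..1} (\<lambda>t. \<Sum>g\<in>edges. \<Sum>j=1..k. ntrace (vf g j) f t * ?L t)
        = (\<Sum>g\<in>edges. integral {0..1} (\<lambda>t. \<Sum>j=1..k. ntrace (vf g j) f t * ?L t))"
      using int by (intro integral_sum integrable_sum) (auto simp: finite_edges)
    moreover have "\<dots> = (\<Sum>g\<in>edges. \<Sum>j=1..k. ?m (vf g j))"
      using int by (intro sum.cong refl integral_sum) auto
    ultimately show ?thesis by (simp add: integral_add)
  qed
  also have "\<dots> = ?m (vf f i)"
    using assms(2)
      sum_sum_eq_single[OF finite_edges finite_atLeastAtMost mem_edges assms(2) vf_perp]
    by (simp add: integral_shifted_legendre)
  finally show ?thesis by simp
qed

lemma decomp_edge_fields_unique:
  assumes "is_decomp k u v0 v1 vf" "is_decomp k u v0' v1' vf'" "i \<in> {1..k}"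
  shows "vf f i = vf' f i"
proof -
  define d where "d = (\<lambda>p. vf f i p - vf' f i p)"
  have v: "vpoly k (vf f i)" "divfree (vf f i)" "\<forall>\<phi>\<in>Phi k. L2K (vf f i) \<phi> = 0"
    using is_decompD(4)[OF assms(1,3)] by auto
  have v': "vpoly k (vf' f i)" "divfree (vf' f i)" "\<forall>\<phi>\<in>Phi k. L2K (vf' f i) \<phi> = 0"
    using is_decompD(4)[OF assms(2,3)] by auto
  have "d = (\<lambda>p. 0)"
  proof (rule zero_if_orthogonal_to_Phi_and_moments_vanish)
    show "vpoly k d" "divfree d"
      using v v' by (simp_all add: d_def vpoly_diff divfree_diff[of k])
    show "\<forall>\<phi>\<in>Phi k. L2K d \<phi> = 0"
    proof
      fix \<phi> assume "\<phi> \<in> Phi k"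
      then have "continuous_on UNIV \<phi>" by (auto simp: Phi_def intro: vpoly_continuous)
      with \<open>\<phi> \<in> Phi k\<close> show "L2K d \<phi> = 0"
        using v v' by (simp add: d_def L2K_diff_left vpoly_continuous)
    qed
    fix g j assume "j \<le> k"
    let ?m = "\<lambda>w. integral {0..1} (\<lambda>t. ntrace w g t * poly (shifted_legendre j) t)"
    have "?m d = ?m (vf f i) - ?m (vf' f i)"
      unfolding d_def ntrace_diff left_diff_distrib
      by (intro integral_diff ntrace_mult_poly_integrable[OF v(1)]
          ntrace_mult_poly_integrable[OF v'(1)])
    moreover have "?m (vf f i) = ?m (vf' f i)"
    proof (cases "(g, j) = (f, i)")
      case True
      then show ?thesis
        using decomp_edge_moment[OF assms(1,3)] decomp_edge_moment[OF assms(2,3)] by simp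
    next
      case False
      then show ?thesis
        using is_decompD(5)[OF assms(1,3) \<open>j \<le> k\<close>] is_decompD(5)[OF assms(2,3) \<open>j \<le> k\<close>]
        by simp
    qed
    ultimately show "?m d = 0" by simp
  qed
  then show ?thesis by (simp add: d_def fun_eq_iff)
qed

theorem uniqueness:
  assumes "is_decomp k u v0 v1 vf" "is_decomp k u v0' v1' vf'"
  shows "v0 = v0' \<and> v1 = v1' \<and> (\<forall>f\<in>edges. \<forall>i\<in>{1..k}. vf f i = vf' f i)"
proof -
  have vf_eq: "\<forall>f\<in>edges. \<forall>i\<in>{1..k}. vf f i = vf' f i"
    using decomp_edge_fields_unique[OF assms] by blast
  obtain c c' where c: "v1 = (\<lambda>p. c)" and c': "v1' = (\<lambda>p. c')"
    using is_decompD(3)[OF assms(1)] is_decompD(3)[OF assms(2)] by blast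
  have "(\<Sum>f\<in>edges. \<Sum>i=1..k. vf f i p) = (\<Sum>f\<in>edges. \<Sum>i=1..k. vf' f i p)" for p
    using vf_eq by (intro sum.cong) auto
  then have sum: "v0 p + c = v0' p + c'" for p
    using is_decompD(1)[OF assms(1), of p] is_decompD(1)[OF assms(2), of p] by (simp add: c c')
  have "c \<bullet> nout e = c' \<bullet> nout e" for e
  proof -
    have "ntrace v0 e 0 = 0" "ntrace v0' e 0 = 0"
      using is_decompD(2)[OF assms(1)] is_decompD(2)[OF assms(2)] by (simp_all add: Phi_def)
    moreover have "(v0 (gam e 0) + c) \<bullet> nout e = (v0' (gam e 0) + c') \<bullet> nout e"
      by (simp only: sum)
    ultimately show ?thesis by (simp add: ntrace_def inner_add_left)
  qed
  from this[of Bottom] this[of Left] have "c = c'" by (simp add: inner_prod_def prod_eq_iff)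
  then show ?thesis using sum vf_eq c c' by (auto simp: fun_eq_iff)
qed

theorem proposition10:
  fixes k :: nat and u :: "real \<times> real \<Rightarrow> real \<times> real"
  assumes "vpoly k u" and "divfree u"
  shows "(\<exists>v0 v1 vf. is_decomp k u v0 v1 vf)
       \<and> (\<forall>v0 v1 vf w0 w1 wf. is_decomp k u v0 v1 vf \<and> is_decomp k u w0 w1 wf
            \<longrightarrow> v0 = w0 \<and> v1 = w1 \<and> (\<forall>f\<in>edges. \<forall>i\<in>{1..k}. vf f i = wf f i))"
  using existence[OF assms] uniqueness by blast

end
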